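(* Let $r$ be a rational number with $0<r<1$ and $r\neq1/p$ for every integer $p\ge2$, written $r=[m_1,\dots,m_k]$ with $k\ge2$, $m_i\in\mathbb{Z}_{>0}$, $m_k\ge2$, let $n\ge2$ be an integer, and let $(S_1,S_2,S_1,S_2)$ be the decomposition of $CS(r)$ described in the context; put $m=m_1$. (1) If $k$ is even and $s$ is a rational number with $[m_1,\dots,m_k,2n-2]<s<[m_1,\dots,m_{k-1}]$, then $CS(s)$ contains $(m,S_{1e},d\langle S_2,S_1\rangle,S_2,S_{1b},m)$ as a subsequence for some integer $d$ with $1\le d\le 2n-3$, where $(m+1,S_{1e})=(S_{1b},m+1)=S_1$. (2) If $k$ is odd and $s$ is a rational number with $[m_1,\dots,m_{k-1}]<s<[m_1,\dots,m_k,2n-2]$, then $CS(s)$ contains $(m+1,S_{2e},d\langle S_1,S_2\rangle,S_1,S_{2b},m+1)$ as a subsequence for some integer $d$ with $1\le d\le 2n-3$, where $(m,S_{2e})=(S_{2b},m)=S_2$.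
   Context: Continued fractions: $[m_1,\dots,m_k]=1/(m_1+1/(m_2+\cdots+1/m_k))$; when $k-1=1$, $[m_1,\dots,m_{k-1}]=1/m_1$. For $s\in\mathbb{Q}\cup\{\infty\}$, $u_s$ is the cyclically reduced, cyclically alternating word in the free group $F(a,b)$ representing the simple loop of slope $s$ on the 4-punctured 2-bridge sphere in the upper tangle complement (well defined up to cyclic permutation and inversion). For a cyclically reduced cyclic word $(w)$, decompose it cyclically into maximal subwords alternately positive (all exponents $+1$) and negative (all exponents $-1$); $CS(w)$ is the cyclic sequence of their lengths, and $CS(s):=CS(u_s)$. $CS(r)$ consists of $m$ and $m+1$ and has a decomposition $CS(r)=((S_1,S_2,S_1,S_2))$ in which each $S_i$ is symmetric (equal to its reverse) and occurs only twice in $CS(r)$, $S_1$ begins and ends with $m+1$, and $S_2$ begins and ends with $m$; this is the decomposition meant. $d\langle A,B\rangle$ denotes $(A,B,\dots,A,B)$ with $d$ copies of $(A,B)$. "Contains as a subsequence" means occurs as a block of consecutive terms of the cyclic sequence. *)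

theory Defs
  imports Complex_Main
begin

fun cf :: "nat list \<Rightarrow> rat" where
  "cf [] = 0"
| "cf (x # xs) = 1 / (of_nat x + cf xs)"

text \<open>Words in the free group F(a,b), as lists of (generator, exponent) with exponent +1 or -1.\<close>
datatype gen = GA | GB

type_synonym fword = "(gen \<times> int) list"

text \<open>The word u_s for s = q/p (p > 0, gcd 1):
  u_s = a^e1 b^e2 ... a^e(2p-1) b^e(2p), with e_i = (-1)^floor(i q / p).\<close>
definition u :: "rat \<Rightarrow> fword" where
  "u s = (let p = nat (snd (quotient_of s)) in
     map (\<lambda>i. (if odd i then GA else GB,
               if even \<lfloor>of_nat i * s\<rfloor> then (1::int) else -1)) [1..<2*p+1])"

function runs :: "'a list \<Rightarrow> nat list" where
  "runs [] = []"
| "runs (x # xs) = Suc (length (takeWhile (\<lambda>y. y = x) xs)) # runs (dropWhile (\<lambda>y. y = x) xs)"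
  by pat_completeness auto
termination
  by (relation "measure length") (auto simp: le_imp_less_Suc length_dropWhile_le)

text \<open>CS of a cyclic word: rotate the exponent sequence so that it starts at a sign change,
  then take run lengths (a representative of the cyclic sequence).\<close>
definition CS_word :: "fword \<Rightarrow> nat list" where
  "CS_word w = (let e = map snd w; n = length e;
                    j = (LEAST j. j < n \<and> e ! j \<noteq> e ! ((j + n - 1) mod n))
                in runs (rotate j e))"

definition CS :: "rat \<Rightarrow> nat list" where
  "CS s = CS_word (u s)"

definition cyc_contains :: "nat list \<Rightarrow> nat list \<Rightarrow> bool" where
  "cyc_contains L P \<longleftrightarrow> (\<exists>i < length L. length P \<le> length L \<and> take (length P) (rotate i L) = P)"

definition cyc_occ :: "nat list \<Rightarrow> nat list \<Rightarrow> nat" where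
  "cyc_occ L P = card {i. i < length L \<and> length P \<le> length L \<and> take (length P) (rotate i L) = P}"

end

theory Submission
  imports Defs
begin

text \<open>
  For \<open>s = q/p\<close> the exponents of \<open>u\<^sub>s\<close> are \<open>(-1)\<^bsup>\<lfloor>i q/p\<rfloor>\<^esup>\<close>, so \<open>CS(s)\<close> is the
  cyclic sequence of the numbers \<open>\<lceil>(J+1) p/q\<rceil> - \<lceil>J p/q\<rceil>\<close> of indices \<open>i\<close> with
  \<open>\<lfloor>i q/p\<rfloor> = J\<close>; it has period \<open>q\<close>.

  Let \<open>r = N/D = [m\<^sub>1,\<dots>,m\<^sub>k]\<close> and \<open>N'/D' = [m\<^sub>1,\<dots>,m\<^sub>k\<^sub>-\<^sub>1]\<close>. Shifting \<open>J\<close> by the inverse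
  \<open>ls\<close> of \<open>D\<close> modulo \<open>N\<close> preserves these run lengths except at \<open>J \<equiv> 0, -1 (mod N)\<close>.
  Since \<open>S\<^sub>1\<close> and \<open>S\<^sub>2\<close> occur only twice, this pins the decomposition down: \<open>S\<^sub>1 S\<^sub>2\<close> are
  the runs \<open>J = 0, \<dots>, N - 1\<close> and \<open>|S\<^sub>1| = ls\<close>, which is \<open>N'\<close> or \<open>N - N'\<close> according to the
  parity of \<open>k\<close>.

  A slope \<open>s\<close> strictly between \<open>N'/D'\<close> and \<open>[m\<^sub>1,\<dots>,m\<^sub>k,c]\<close> is \<open>Q/P\<close> with
  \<open>Q = uN + vN'\<close>, \<open>P = uD + vD'\<close> and \<open>0 < u < c v\<close>. For \<open>d \<approx> u/v\<close> and a suitable offset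
  \<open>e\<close>, the quotients \<open>\<lceil>(t P \<plusminus> e)/Q\<rceil>\<close> agree with the corresponding quotients for \<open>r\<close>
  for \<open>t < L = (d+1) N + N'\<close> and are off by one at \<open>t = L\<close>. So \<open>CS(s)\<close> contains the \<open>L\<close>
  runs of \<open>S\<^sub>1 (S\<^sub>2 S\<^sub>1)\<^sup>d S\<^sub>2 S\<^sub>1\<close> (for odd \<open>k\<close>: \<open>S\<^sub>2 (S\<^sub>1 S\<^sub>2)\<^sup>d S\<^sub>1 S\<^sub>2\<close>) with the first and
  the last one changed by one.
\<close>

section \<open>Ceiling quotients\<close>

lemma div_eq_iff_bounds:
  fixes x p k :: int
  assumes "0 < p"
  shows "x div p = k \<longleftrightarrow> k * p \<le> x \<and> x < (k + 1) * p"
proof -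
  have "x div p = k \<longleftrightarrow>
      of_int k \<le> (of_int x / of_int p :: rat) \<and> of_int x / of_int p < (of_int k + 1 :: rat)"
    by (metis floor_divide_of_int_eq floor_eq_iff)
  also have "(of_int k + 1) * of_int p = (of_int ((k + 1) * p) :: rat)" by simp
  then have "(of_int k \<le> (of_int x / of_int p :: rat) \<and> of_int x / of_int p < (of_int k + 1 :: rat))
      \<longleftrightarrow> k * p \<le> x \<and> x < (k + 1) * p"
    using assms by (simp add: le_divide_eq divide_less_eq del: of_int_mult of_int_add flip: of_int_mult)
  finally show ?thesis .
qed

lemma div_bounds: "0 < p \<Longrightarrow> x div p * p \<le> x \<and> x < (x div p + 1) * p" for x p :: int
  using div_eq_iff_bounds by blast

definition ceil_div :: "int \<Rightarrow> int \<Rightarrow> int" where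
  "ceil_div X q = - ((- X) div q)"

lemma ceil_div_eq_ceiling: "ceil_div X q = \<lceil>(of_int X / of_int q :: rat)\<rceil>"
  unfolding ceil_div_def ceiling_divide_eq_div ..

lemma ceil_div_le_iff: "0 < q \<Longrightarrow> ceil_div X q \<le> Y \<longleftrightarrow> X \<le> Y * q"
  unfolding ceil_div_eq_ceiling ceiling_le_iff
  by (simp add: divide_le_eq flip: of_int_mult)

lemma less_ceil_div_iff: "0 < q \<Longrightarrow> Y < ceil_div X q \<longleftrightarrow> Y * q < X"
  using ceil_div_le_iff[of q X Y] by (meson not_le)

lemma ceil_div_bounds: "0 < q \<Longrightarrow> (ceil_div X q - 1) * q < X \<and> X \<le> ceil_div X q * q"
  using ceil_div_le_iff[of q X "ceil_div X q"] less_ceil_div_iff[of q "ceil_div X q - 1" X] by auto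

lemma ceil_div_eqI: "0 < q \<Longrightarrow> (a - 1) * q < X \<Longrightarrow> X \<le> a * q \<Longrightarrow> ceil_div X q = a"
  using ceil_div_le_iff[of q X a] less_ceil_div_iff[of q "a - 1" X] by linarith

lemma ceil_div_add_mult: "0 < q \<Longrightarrow> ceil_div (X + c * q) q = ceil_div X q + c"
  unfolding ceil_div_eq_ceiling by (simp add: add_divide_distrib flip: ceiling_add_of_int)

lemma ceil_div_mono: "0 < q \<Longrightarrow> X \<le> X' \<Longrightarrow> ceil_div X q \<le> ceil_div X' q"
  unfolding ceil_div_def by (simp add: zdiv_mono1)

lemma ceil_div_add_1: "0 < q \<Longrightarrow> \<not> q dvd X \<Longrightarrow> ceil_div (X + 1) q = ceil_div X q"
proof -
  assume q: "0 < q" and "\<not> q dvd X"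
  then have "X \<noteq> ceil_div X q * q" by (metis dvd_triv_right)
  then show ?thesis using ceil_div_bounds[OF q, of X] by (intro ceil_div_eqI[OF q]) auto
qed

lemma div_eq_iff_ceil_div_bounds:
  fixes x p q K :: int
  assumes "0 < p" "0 < q"
  shows "x * q div p = K \<longleftrightarrow> ceil_div (K * p) q \<le> x \<and> x < ceil_div ((K + 1) * p) q"
  unfolding div_eq_iff_bounds[OF assms(1)] ceil_div_le_iff[OF assms(2)] less_ceil_div_iff[OF assms(2)]
  by (simp add: algebra_simps)

lemma ceil_div_eqI_scaled:
  fixes N Q X a R :: int
  assumes N: "0 < N" and Q: "0 < Q" and X: "N * X = N * (a * Q) - R" and R: "0 \<le> R" "R < N * Q"
  shows "ceil_div X Q = a"
proof (rule ceil_div_eqI[OF Q])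
  have "N * ((a - 1) * Q) < N * X" using X R(2) by (simp add: algebra_simps)
  then show "(a - 1) * Q < X" using N by simp
  have "N * X \<le> N * (a * Q)" using X R(1) by simp
  then show "X \<le> a * Q" using N by simp
qed

section \<open>\<open>CS(s)\<close> as a sequence of run lengths\<close>

lemma runs_replicate_append:
  assumes "ys = [] \<or> hd ys \<noteq> x"
  shows "runs (replicate (Suc c) x @ ys) = Suc c # runs ys"
proof -
  have tw: "takeWhile (\<lambda>y. y = x) ys = []" and dw: "dropWhile (\<lambda>y. y = x) ys = ys"
    using assms by (cases ys; auto)+
  have "takeWhile (\<lambda>y. y = x) (replicate c x @ ys) = replicate c x"
    by (subst takeWhile_append2) (auto simp: tw)
  moreover have "dropWhile (\<lambda>y. y = x) (replicate c x @ ys) = ys"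
    by (subst dropWhile_append2) (auto simp: dw)
  ultimately show ?thesis by simp
qed

lemma runs_map_piecewise_constant:
  assumes "\<forall>k<M. S k < S (Suc k)"
    and "\<forall>k<M. \<forall>i. S k \<le> i \<and> i < S (Suc k) \<longrightarrow> g i = a k"
    and "\<forall>k. a k \<noteq> a (Suc k)"
  shows "runs (map g [S 0..<S M]) = map (\<lambda>k. S (Suc k) - S k) [0..<M]"
  using assms
proof (induction M arbitrary: S a)
  case 0
  then show ?case by simp
next
  case (Suc M)
  let ?rest = "map g [S 1..<S (Suc M)]"
  have mono: "S 1 \<le> S (Suc M)"
    using Suc.prems(1) by (induction M) (auto intro: order.trans less_imp_le)
  have split: "[S 0..<S (Suc M)] = [S 0..<S 1] @ [S 1..<S (Suc M)]"
    using Suc.prems(1)[rule_format, of 0] mono upt_add_eq_append[of "S 0" "S 1" "S (Suc M) - S 1"]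
    by (simp del: upt_Suc)
  have first: "map g [S 0..<S 1] = replicate (Suc (S 1 - S 0 - 1)) (a 0)"
    using Suc.prems(1,2) by (intro replicate_eqI) auto
  have IH: "runs ?rest = map (\<lambda>k. S (Suc (Suc k)) - S (Suc k)) [0..<M]"
    using Suc.IH[of "\<lambda>k. S (Suc k)" "\<lambda>k. a (Suc k)"] Suc.prems by auto
  have hd: "?rest = [] \<or> hd ?rest \<noteq> a 0"
  proof (cases "S 1 < S (Suc M)")
    case True
    then have "M > 0" by (cases M) auto
    then have "hd ?rest = a 1" using True Suc.prems(1,2) by (simp add: upt_conv_Cons)
    then show ?thesis using Suc.prems(3) by (metis One_nat_def)
  qed simp
  have "runs (map g [S 0..<S (Suc M)]) = Suc (S 1 - S 0 - 1) # runs ?rest"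
    unfolding split map_append first by (rule runs_replicate_append[OF hd])
  then show ?case
    using IH Suc.prems(1)[rule_format, of 0] by (simp add: map_upt_Suc del: upt_Suc)
qed

lemma periodic_mod:
  fixes f :: "nat \<Rightarrow> 'a"
  assumes "\<forall>i. f (i + n) = f i"
  shows "f (i mod n) = f i"
proof -
  have "f (x + k * n) = f x" for x k
  proof (induction k)
    case (Suc k)
    then show ?case using assms by (metis add.assoc add.commute mult_Suc)
  qed simp
  then show ?thesis by (metis mod_div_mult_eq)
qed

lemma rotate_map_upt_periodic:
  assumes "\<forall>i. f (i + n) = f i"
  shows "rotate j (map f [0..<n]) = map (\<lambda>i. f (i + j)) [0..<n]"
  by (rule nth_equalityI) (simp_all add: nth_rotate periodic_mod[OF assms] add.commute)

definition alt_sign :: "int \<Rightarrow> int" where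
  "alt_sign z = (if even z then 1 else -1)"

text \<open>For \<open>s = q/p\<close> this counts the \<open>i\<close> with \<open>\<lfloor>i q / p\<rfloor> = J\<close>, i.e. it is the length of
  the \<open>J\<close>-th maximal block of equal exponents of \<open>u\<^sub>s\<close>.\<close>
definition run_length :: "int \<Rightarrow> int \<Rightarrow> int \<Rightarrow> nat" where
  "run_length p q J = nat (ceil_div ((J + 1) * p) q - ceil_div (J * p) q)"

lemma int_run_length:
  "0 < q \<Longrightarrow> 0 \<le> p \<Longrightarrow> int (run_length p q J) = ceil_div ((J + 1) * p) q - ceil_div (J * p) q"
  unfolding run_length_def using ceil_div_mono[of q "J * p" "(J + 1) * p"] by (simp add: algebra_simps)

lemma run_length_pos: "0 < q \<Longrightarrow> q \<le> p \<Longrightarrow> 0 < run_length p q J"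
proof -
  assume q: "0 < q" and "q \<le> p"
  then have "ceil_div (J * p + 1 * q) q \<le> ceil_div ((J + 1) * p) q"
    by (intro ceil_div_mono) (auto simp: algebra_simps)
  then show ?thesis unfolding run_length_def ceil_div_add_mult[OF q] by simp
qed

lemma run_length_periodic: "0 < q \<Longrightarrow> run_length p q (J + c * q) = run_length p q J"
proof -
  assume q: "0 < q"
  have "(J + c * q + 1) * p = (J + 1) * p + (c * p) * q" "(J + c * q) * p = J * p + (c * p) * q"
    by (simp_all add: algebra_simps)
  then show ?thesis unfolding run_length_def by (simp add: ceil_div_add_mult[OF q])
qed

lemma run_length_cong:
  assumes "0 < q" "J mod q = J' mod q"
  shows "run_length p q J = run_length p q J'"
proof -
  obtain c where "J - J' = q * c"
    using assms(2) by (auto simp: mod_eq_dvd_iff)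
  then have "J = J' + c * q" by (simp add: algebra_simps)
  then show ?thesis using run_length_periodic[OF assms(1)] by simp
qed

lemma quotient_of_between_0_1:
  assumes "quotient_of s = (q, p)" and "0 < s" "s < 1"
  shows "s = of_int q / of_int p" "0 < q" "q < p"
proof -
  show s: "s = of_int q / of_int p" using quotient_of_div[OF assms(1)] .
  have "0 < p" using quotient_of_denom_pos[OF assms(1)] .
  then show "0 < q" "q < p" using assms(2,3) unfolding s by (simp_all add: divide_less_eq zero_less_divide_iff)
qed

lemma map_snd_u:
  assumes "quotient_of s = (q, p)"
  shows "map snd (u s) = map (\<lambda>i. alt_sign ((int i + 1) * q div p)) [0..<2 * nat p]"
proof -
  have "\<lfloor>(1 + of_nat i) * s\<rfloor> = (int i + 1) * q div p" for i
    using quotient_of_div[OF assms] floor_divide_of_int_eq[of "(int i + 1) * q" p]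
    by (simp add: algebra_simps)
  then show ?thesis
    unfolding u_def assms alt_sign_def Let_def by (intro nth_equalityI) (auto simp del: upt_Suc)
qed

lemma floor_ratio_steps:
  fixes p q :: int
  assumes q: "0 < q" "q < p" and lev_def: "lev = (\<lambda>i::nat. (int i + 1) * q div p)"
  shows "i \<le> i' \<Longrightarrow> lev i \<le> lev i'" and "lev (Suc i) \<le> lev i + 1" and "lev 0 = 0"
    and "lev (2 * nat p - 1) = 2 * q" and "lev (i + 2 * nat p) = lev i + 2 * q"
proof -
  have p: "0 < p" using q by simp
  show "i \<le> i' \<Longrightarrow> lev i \<le> lev i'" unfolding lev_def using p q by (intro zdiv_mono1 mult_right_mono) auto
  have "(int (Suc i) + 1) * q \<le> (int i + 1) * q + 1 * p" using q by (simp add: algebra_simps)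
  then have "(int (Suc i) + 1) * q div p \<le> ((int i + 1) * q + 1 * p) div p"
    using p by (intro zdiv_mono1) auto
  then show "lev (Suc i) \<le> lev i + 1" unfolding lev_def using p by simp
  show "lev 0 = 0" unfolding lev_def using q by simp
  show "lev (2 * nat p - 1) = 2 * q" unfolding lev_def using p by (simp add: of_nat_diff)
  have "(int (i + 2 * nat p) + 1) * q = (int i + 1) * q + (2 * q) * p" using p by (simp add: algebra_simps)
  then show "lev (i + 2 * nat p) = lev i + 2 * q" unfolding lev_def using p by simp
qed

lemma unit_step_crossing:
  fixes f :: "nat \<Rightarrow> int"
  assumes "f 0 = 0" "1 \<le> f m" "\<And>i. 0 \<le> f i" "\<And>i. f (Suc i) \<le> f i + 1"
  shows "\<exists>j. 0 < j \<and> j \<le> m \<and> f (j - 1) = 0 \<and> f j = 1"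
proof -
  define j where "j = (LEAST i. 1 \<le> f i)"
  have j: "1 \<le> f j" "j \<le> m" unfolding j_def using assms(2) by (auto intro: LeastI Least_le)
  then have "0 < j" using assms(1) by (metis gr0I not_one_le_zero)
  then have "\<not> 1 \<le> f (j - 1)" unfolding j_def by (metis Least_le diff_less not_le less_one)
  moreover have "f j \<le> f (j - 1) + 1" using assms(4)[of "j - 1"] \<open>0 < j\<close> by simp
  ultimately show ?thesis using j \<open>0 < j\<close> assms(3)[of "j - 1"] by (intro exI[of _ j]) auto
qed

lemma pred_mod: "0 < j \<Longrightarrow> j < n \<Longrightarrow> (j + n - 1) mod n = j - 1" for j n :: nat
proof -
  assume "0 < j" "j < n"
  then have "j + n - 1 = (j - 1) + n" by simp
  then show ?thesis using \<open>j < n\<close> by (simp only: mod_add_self2) simp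
qed

text \<open>\<open>CS_word\<close> starts reading at the first sign change, which lies at a step of the floor
  sequence \<open>\<lfloor>(i+1) q / p\<rfloor>\<close>.\<close>
lemma CS_eq_runs_rotate:
  assumes qs: "quotient_of s = (q, p)" and "0 < s" "s < 1"
  defines "lev \<equiv> \<lambda>i::nat. (int i + 1) * q div p"
  shows "\<exists>j. 1 \<le> j \<and> lev (j - 1) + 1 = lev j \<and>
    CS s = runs (map (\<lambda>i. alt_sign (lev (i + j))) [0..<2 * nat p])"
proof -
  have q: "0 < q" "q < p" using quotient_of_between_0_1[OF assms(1-3)] by auto
  note lev = floor_ratio_steps[OF q lev_def[THEN meta_eq_to_obj_eq]]
  define n where "n = 2 * nat p"
  have n: "0 < n" using q unfolding n_def by simp
  define e where "e = map snd (u s)"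
  have e: "e = map (\<lambda>i. alt_sign (lev i)) [0..<n]"
    unfolding e_def n_def lev_def using map_snd_u[OF qs] .
  define P where "P j \<longleftrightarrow> j < n \<and> e ! j \<noteq> e ! ((j + n - 1) mod n)" for j
  have CS: "CS s = runs (rotate (LEAST j. P j) e)"
  proof -
    have "length e = n" unfolding e by simp
    then show ?thesis unfolding CS_def CS_word_def Let_def P_def by (simp add: e_def[symmetric])
  qed
  define j where "j = (LEAST j. P j)"
  have "P j"
  proof -
    have "0 \<le> lev i" for i using lev(1)[of 0 i] lev(3) by simp
    then obtain j0 where "0 < j0" "j0 \<le> n - 1" "lev (j0 - 1) = 0" "lev j0 = 1"
      using unit_step_crossing[of lev "n - 1"] lev(2-4) q unfolding n_def by auto
    then have "P j0" unfolding P_def e using pred_mod[of j0 n] n by (simp add: alt_sign_def)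
    then show ?thesis unfolding j_def by (rule LeastI)
  qed
  then have jn: "j < n" and ej: "e ! j \<noteq> e ! ((j + n - 1) mod n)" unfolding P_def by auto
  have "j \<noteq> 0"
  proof
    assume "j = 0"
    then show False using ej e lev(3,4) n unfolding n_def by (simp add: alt_sign_def)
  qed
  then have "lev (j - 1) \<noteq> lev j" "lev (j - 1) \<le> lev j" "lev j \<le> lev (j - 1) + 1"
    using ej jn e pred_mod[of j n] lev(1)[of "j - 1" j] lev(2)[of "j - 1"] by auto
  moreover have "rotate j e = map (\<lambda>i. alt_sign (lev (i + j))) [0..<n]"
    unfolding e n_def by (rule rotate_map_upt_periodic) (simp add: lev(5) alt_sign_def add.assoc)
  ultimately show ?thesis
    using \<open>j \<noteq> 0\<close> CS unfolding j_def n_def by (intro exI[of _ "LEAST j. P j"]) auto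
qed

lemma runs_signs_eq_run_lengths:
  assumes q: "0 < q" "q < p" and j: "1 \<le> j" "lev (j - 1) + 1 = lev j"
    and lev_def: "lev = (\<lambda>i::nat. (int i + 1) * q div p)"
  shows "runs (map (\<lambda>i. alt_sign (lev (i + j))) [0..<2 * nat p])
    = map (\<lambda>k. run_length p q (lev j + int k)) [0..<2 * nat q]"
proof -
  have p: "0 < p" using q by simp
  define K where "K = lev j"
  have "(int j + 1 - 1) * q < K * p" "K * p \<le> (int j + 1) * q"
    using div_bounds[OF p, of "(int j + 1) * q"] div_bounds[OF p, of "int j * q"] j
    unfolding K_def lev_def by (auto simp: of_nat_diff)
  then have czK: "ceil_div (K * p) q = int j + 1" by (rule ceil_div_eqI[OF q(1)])
  define S where "S k = nat (ceil_div ((K + int k) * p) q - int j - 1)" for k :: nat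
  have S_int: "int (S k) = ceil_div ((K + int k) * p) q - int j - 1" for k
    unfolding S_def using ceil_div_mono[OF q(1), of "K * p" "(K + int k) * p"] czK p by simp
  have S_step: "int (S (Suc k)) - int (S k) = int (run_length p q (K + int k))" for k
    unfolding S_int run_length_def
    using ceil_div_mono[OF q(1), of "(K + int k) * p" "(K + int k + 1) * p"] p
    by (simp add: algebra_simps)
  have "S 0 = 0" using S_int[of 0] czK by simp
  moreover have "S (2 * nat q) = 2 * nat p"
  proof -
    have "(K + int (2 * nat q)) * p = K * p + (2 * p) * q" using q by (simp add: algebra_simps)
    then show ?thesis using S_int[of "2 * nat q"] czK ceil_div_add_mult[OF q(1)] p by simp
  qed
  moreover have "runs (map (\<lambda>i. alt_sign (lev (i + j))) [S 0..<S (2 * nat q)])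
      = map (\<lambda>k. S (Suc k) - S k) [0..<2 * nat q]"
  proof (rule runs_map_piecewise_constant[where a = "\<lambda>k. alt_sign (K + int k)"])
    show "\<forall>k<2 * nat q. S k < S (Suc k)"
    proof (intro allI impI)
      fix k
      have "0 < int (run_length p q (K + int k))" using run_length_pos[OF q(1)] q(2) by simp
      then show "S k < S (Suc k)" using S_step[of k] by linarith
    qed
    show "\<forall>k<2 * nat q. \<forall>i. S k \<le> i \<and> i < S (Suc k) \<longrightarrow> alt_sign (lev (i + j)) = alt_sign (K + int k)"
    proof (intro allI impI)
      fix k i assume "S k \<le> i \<and> i < S (Suc k)"
      then have "lev (i + j) = K + int k"
        using S_int[of k] S_int[of "Suc k"] div_eq_iff_ceil_div_bounds[OF p q(1), of "int (i + j) + 1"]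
        unfolding lev_def by (simp add: algebra_simps)
      then show "alt_sign (lev (i + j)) = alt_sign (K + int k)" by simp
    qed
    show "\<forall>k. alt_sign (K + int k) \<noteq> alt_sign (K + int (Suc k))" by (simp add: alt_sign_def)
  qed
  moreover have "S (Suc k) - S k = run_length p q (K + int k)" for k
    using S_step[of k] by linarith
  ultimately show ?thesis unfolding K_def by simp
qed

lemma CS_eq_run_lengths:
  assumes "quotient_of s = (q, p)" and "0 < s" "s < 1"
  shows "\<exists>K. CS s = map (\<lambda>k. run_length p q (K + int k)) [0..<2 * nat q]"
proof -
  obtain j where "1 \<le> j" "(int (j - 1) + 1) * q div p + 1 = (int j + 1) * q div p"
    and "CS s = runs (map (\<lambda>i. alt_sign ((int (i + j) + 1) * q div p)) [0..<2 * nat p])"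
    using CS_eq_runs_rotate[OF assms] by blast
  then show ?thesis
    using runs_signs_eq_run_lengths[OF quotient_of_between_0_1(2,3)[OF assms], of j] by auto
qed

section \<open>Blocks of a periodic run-length sequence\<close>

lemma nth_rotate_run_lengths:
  assumes q: "0 < q" and CS: "L = map (\<lambda>k. run_length p q (K + int k)) [0..<2 * nat q]"
    and i: "i < 2 * nat q"
  shows "rotate j L ! i = run_length p q (K + int j + int i)"
proof -
  have "rotate j L ! i = run_length p q (K + int ((j + i) mod (2 * nat q)))"
    using i q unfolding CS by (simp add: nth_rotate del: upt_Suc)
  also have "\<dots> = run_length p q (K + int j + int i)"
  proof (rule run_length_cong[OF q])
    have "int ((j + i) mod (2 * nat q)) mod q = (int j + int i) mod (2 * q) mod q"
      using q by (simp add: zmod_int)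
    also have "\<dots> = (int j + int i) mod q" by (rule mod_mod_cancel) simp
    finally show "(K + int ((j + i) mod (2 * nat q))) mod q = (K + int j + int i) mod q"
      by (metis mod_add_right_eq add.assoc)
  qed
  finally show ?thesis .
qed

lemma take_rotate_run_lengths:
  assumes q: "0 < q" and CS: "L = map (\<lambda>k. run_length p q (K + int k)) [0..<2 * nat q]"
    and i: "i < 2 * nat q" "(K + int i) mod q = J mod q"
    and W: "length W \<le> 2 * nat q" "\<forall>t < length W. W ! t = run_length p q (J + int t)"
  shows "take (length W) (rotate i L) = W"
proof (rule nth_equalityI)
  show "length (take (length W) (rotate i L)) = length W" using CS W(1) by simp
  fix t assume "t < length (take (length W) (rotate i L))"
  then have t: "t < length W" by simp
  have "take (length W) (rotate i L) ! t = run_length p q (K + int i + int t)"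
    using nth_rotate_run_lengths[OF q CS, of t i] t W(1) by simp
  also have "\<dots> = run_length p q (J + int t)"
    using i(2) by (intro run_length_cong[OF q]) (metis mod_add_left_eq)
  finally show "take (length W) (rotate i L) ! t = W ! t" using W(2) t by simp
qed

lemma cyc_contains_run_lengths:
  assumes q: "0 < q" and CS: "L = map (\<lambda>k. run_length p q (K + int k)) [0..<2 * nat q]"
    and W: "length W \<le> 2 * nat q" "\<forall>t < length W. W ! t = run_length p q (J + int t)"
  shows "cyc_contains L W"
proof -
  define i where "i = nat ((J - K) mod q)"
  have "i < nat q" "(K + int i) mod q = J mod q"
    using q unfolding i_def by (simp_all add: mod_add_right_eq)
  then have "i < 2 * nat q" "(K + int i) mod q = J mod q" by simp_all
  then show ?thesis
    using take_rotate_run_lengths[OF q CS _ _ W] W(1) CS unfolding cyc_contains_def by auto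
qed

text \<open>\<open>L\<close> has period \<open>q\<close> and length \<open>2q\<close>, so every occurrence of a block comes with a
  second one \<open>q\<close> positions later.\<close>
lemma cyc_occ_run_lengths_ge4:
  assumes q: "0 < q" and CS: "L = map (\<lambda>k. run_length p q (K + int k)) [0..<2 * nat q]"
    and W: "length W \<le> 2 * nat q"
    and at_J: "\<forall>t < length W. W ! t = run_length p q (J + int t)"
    and at_J': "\<forall>t < length W. W ! t = run_length p q (J' + int t)"
    and "J mod q \<noteq> J' mod q"
  shows "4 \<le> cyc_occ L W"
proof -
  define A where "A = {i. i < length L \<and> length W \<le> length L \<and> take (length W) (rotate i L) = W}"
  have occ: "i \<in> A \<and> i + nat q \<in> A"
    if "i < nat q" "(K + int i) mod q = J0 mod q" "\<forall>t < length W. W ! t = run_length p q (J0 + int t)"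
    for i J0
  proof -
    have "(K + int (i + nat q)) mod q = J0 mod q" using that(2) q by (simp add: add.assoc[symmetric])
    then show ?thesis
      unfolding A_def using take_rotate_run_lengths[OF q CS _ _ W(1) that(3)] that(1,2) W(1) CS
      by auto
  qed
  define i where "i = nat ((J - K) mod q)"
  define i' where "i' = nat ((J' - K) mod q)"
  have "i < nat q" "i' < nat q" "(K + int i) mod q = J mod q" "(K + int i') mod q = J' mod q"
    using q unfolding i_def i'_def by (simp_all add: mod_add_right_eq)
  moreover from this have "i \<noteq> i'" using assms(6) by metis
  ultimately have "{i, i + nat q, i', i' + nat q} \<subseteq> A" "card {i, i + nat q, i', i' + nat q} = 4"
    using occ[OF _ _ at_J] occ[OF _ _ at_J'] by auto
  moreover have "finite A" unfolding A_def by auto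
  ultimately show ?thesis unfolding cyc_occ_def A_def[symmetric] by (metis card_mono)
qed

lemma run_length_from_partial_sums:
  assumes Q: "0 < Q" "0 \<le> P"
    and F: "\<forall>t. 0 \<le> t \<and> t \<le> int M \<longrightarrow> ceil_div ((J + t) * P) Q - ceil_div (J * P) Q
      = G t + \<sigma> * ((if 1 \<le> t then 1 else 0) + (if t = int M then 1 else 0))"
    and k: "k < M"
  shows "int (run_length P Q (J + int k))
    = G (int k + 1) - G (int k) + \<sigma> * ((if k = 0 then 1 else 0) + (if k = M - 1 then 1 else 0))"
proof -
  have "ceil_div ((J + (int k + 1)) * P) Q - ceil_div (J * P) Q
      = G (int k + 1) + \<sigma> * (1 + (if k = M - 1 then 1 else 0))"
    using F[rule_format, of "int k + 1"] k by auto
  moreover have "ceil_div ((J + int k) * P) Q - ceil_div (J * P) Q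
      = G (int k) + \<sigma> * (if k = 0 then 0 else 1)"
    using F[rule_format, of "int k"] k by auto
  ultimately show ?thesis
    unfolding int_run_length[OF Q] by (cases "k = 0") (auto simp: algebra_simps)
qed

lemma cyc_contains_perturbed_block:
  assumes Q: "0 < Q" "0 \<le> P" and CS: "L = map (\<lambda>k. run_length P Q (K + int k)) [0..<2 * nat Q]"
    and N: "0 < N" "0 \<le> D"
    and F: "\<forall>t. 0 \<le> t \<and> t \<le> int (length W) \<longrightarrow> ceil_div ((J + t) * P) Q - ceil_div (J * P) Q
      = ceil_div ((T + t) * D) N - ceil_div (T * D) N
        + \<sigma> * ((if 1 \<le> t then 1 else 0) + (if t = int (length W) then 1 else 0))"
    and W: "\<forall>t < length W. W ! t = run_length D N (T + int t)" "2 \<le> length W" "length W \<le> 2 * nat Q"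
    and ends: "W = [x] @ mid @ [x]" "B = [y] @ mid @ [y]" "int y = int x + \<sigma>"
  shows "cyc_contains L B"
proof (rule cyc_contains_run_lengths[OF Q(1) CS])
  show "length B \<le> 2 * nat Q" using W(3) ends by simp
  show "\<forall>t < length B. B ! t = run_length P Q (J + int t)"
  proof (intro allI impI)
    fix t assume "t < length B"
    then have t: "t < length W" using ends by simp
    have "int (run_length P Q (J + int t))
        = int (W ! t) + \<sigma> * ((if t = 0 then 1 else 0) + (if t = length W - 1 then 1 else 0))"
      using run_length_from_partial_sums[OF Q F t] W(1) t int_run_length[OF N, of "T + int t"]
      by (simp add: algebra_simps)
    moreover have "B ! t = (if t = 0 \<or> t = length W - 1 then y else W ! t)"
      "W ! 0 = x" "W ! (length W - 1) = x"
      using t ends by (auto simp: nth_append nth_Cons')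
    ultimately show "B ! t = run_length P Q (J + int t)"
      using W(2) ends(3) by (auto split: if_splits)
  qed
qed

lemma nth_repeated_period:
  assumes X: "\<forall>i < length X. X ! i = f i" and f: "\<forall>i. f (i + length X) = f i"
    and Y: "take (length Y) X = Y"
  shows "t < length (concat (replicate k X) @ Y) \<Longrightarrow> (concat (replicate k X) @ Y) ! t = f t"
proof (induction k arbitrary: t)
  case 0
  then have t: "t < length Y" by simp
  have "length Y \<le> length X" using arg_cong[OF Y, of length] by simp
  then have "Y ! t = X ! t" using t nth_take[OF t, of X] Y by simp
  then show ?case using X t \<open>length Y \<le> length X\<close> by simp
next
  case (Suc k)
  show ?case
  proof (cases "t < length X")
    case True
    then show ?thesis using X by (simp add: nth_append)
  next
    case False
    then have "(concat (replicate (Suc k) X) @ Y) ! t = (concat (replicate k X) @ Y) ! (t - length X)"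
      by (simp add: nth_append)
    also have "\<dots> = f (t - length X)" using Suc False by simp
    also have "\<dots> = f t" using f[rule_format, of "t - length X"] False by simp
    finally show ?thesis .
  qed
qed

lemma nth_alternating_block:
  assumes AB: "\<forall>i < length (A @ B). (A @ B) ! i = f i" and f: "\<forall>i. f (i + length (A @ B)) = f i"
  shows "\<forall>t < length (A @ concat (replicate d (B @ A)) @ B @ A).
    (A @ concat (replicate d (B @ A)) @ B @ A) ! t = f t"
proof -
  have "A @ concat (replicate d (B @ A)) = concat (replicate d (A @ B)) @ A"
    by (induction d) auto
  then have eq: "A @ concat (replicate d (B @ A)) @ B @ A = concat (replicate (Suc d) (A @ B)) @ A"
    by (simp add: replicate_append_same[symmetric])
  show ?thesis unfolding eq
    using nth_repeated_period[OF AB f, where Y = A and k = "Suc d"] by (simp del: replicate_Suc)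
qed

lemma alternating_block_length:
  "length (A @ concat (replicate k (B @ A)) @ B @ A) = (k + 1) * (length A + length B) + length A"
  by (simp add: length_concat sum_list_replicate algebra_simps)

lemma alternating_block_ends:
  assumes "A \<noteq> []" "hd A = x" "last A = x"
  shows "A @ M @ A = [x] @ (tl A @ M @ butlast A) @ [x]"
  using assms by (metis append_butlast_last_id hd_Cons_tl append_Cons append_Nil append.assoc)

section \<open>Blocks occurring twice in \<open>CS(N/D)\<close>\<close>

lemma run_length_add_inverse:
  assumes N: "0 < N" and ls: "(ls * D) mod N = 1"
    and J: "\<not> N dvd J" "\<not> N dvd J + 1"
  shows "run_length D N (J + ls) = run_length D N J"
proof -
  obtain k where k: "ls * D = 1 + k * N" using ls by (metis mod_div_mult_eq add.commute)
  have "coprime D N"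
  proof (rule coprimeI)
    fix c assume "c dvd D" "c dvd N"
    then have "c dvd ls * D - k * N" by simp
    then show "is_unit c" using k by simp
  qed
  then have "\<not> N dvd J * D" "\<not> N dvd (J + 1) * D"
    using J by (simp_all add: coprime_commute coprime_dvd_mult_left_iff)
  moreover have "(J + ls) * D = J * D + 1 + k * N" "(J + ls + 1) * D = (J + 1) * D + 1 + k * N"
    using k by (simp_all add: algebra_simps)
  ultimately show ?thesis
    unfolding run_length_def by (simp add: ceil_div_add_mult[OF N] ceil_div_add_1[OF N])
qed

lemma run_length_at_multiple:
  assumes N: "2 \<le> N" and "0 \<le> D" "\<not> N dvd D" "N dvd J"
  shows "run_length D N J = nat (D div N) + 1"
proof -
  have "run_length D N J = run_length D N 0"
    using assms(4) N by (intro run_length_cong) auto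
  moreover have "D div N * N \<noteq> D" using assms(3) by (metis dvd_triv_right)
  then have "ceil_div D N = D div N + 1"
    using N div_bounds[of N D] by (intro ceil_div_eqI) auto
  moreover have "0 \<le> D div N" using assms(2) N by (simp add: pos_imp_zdiv_nonneg_iff)
  ultimately show ?thesis unfolding run_length_def by (simp add: ceil_div_def)
qed

text \<open>Otherwise \<open>run_length_add_inverse\<close> moves the block by \<open>\<plusminus>ls\<close> to an offset not
  congruent to \<open>J\<close> modulo \<open>N\<close>, which yields two more occurrences.\<close>
lemma twice_occurring_block_meets_multiples:
  assumes N: "2 \<le> N" and ls: "(ls * D) mod N = 1"
    and CS: "L = map (\<lambda>k. run_length D N (K + int k)) [0..<2 * nat N]"
    and W: "length W \<le> 2 * nat N" "\<forall>t < length W. W ! t = run_length D N (J + int t)"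
    and occ: "cyc_occ L W = 2"
  shows "\<exists>x. J \<le> x \<and> x \<le> J + int (length W) \<and> N dvd x"
    and "\<exists>x. J \<le> x \<and> x \<le> J + int (length W) \<and> N dvd x - ls"
proof -
  have N0: "0 < N" using N by simp
  have "\<not> N dvd ls" using ls N by (metis dvd_mult2 dvd_imp_mod_0 zero_neq_one)
  then have ls_mod: "J mod N \<noteq> (J + ls) mod N" "J mod N \<noteq> (J - ls) mod N"
    by (auto simp: mod_eq_dvd_iff)
  have shift: "run_length D N (J' + ls + int t) = run_length D N (J' + int t)"
    if "\<not> (\<exists>x. J' \<le> x \<and> x \<le> J' + int (length W) \<and> N dvd x)" "t < length W" for J' t
  proof -
    have "\<not> N dvd J' + int t" "\<not> N dvd J' + int t + 1" using that by auto
    then have "run_length D N (J' + int t + ls) = run_length D N (J' + int t)"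
      by (rule run_length_add_inverse[OF N0 ls])
    then show ?thesis by (simp add: algebra_simps)
  qed
  show "\<exists>x. J \<le> x \<and> x \<le> J + int (length W) \<and> N dvd x"
  proof (rule ccontr)
    assume "\<not> ?thesis"
    then have "\<forall>t < length W. W ! t = run_length D N (J + ls + int t)"
      using shift W(2) by simp
    then have "4 \<le> cyc_occ L W"
      using cyc_occ_run_lengths_ge4[OF N0 CS W(1) W(2) _ ls_mod(1)] by simp
    then show False using occ by simp
  qed
  show "\<exists>x. J \<le> x \<and> x \<le> J + int (length W) \<and> N dvd x - ls"
  proof (rule ccontr)
    assume no_mult: "\<not> ?thesis"
    have "\<not> (\<exists>x. J - ls \<le> x \<and> x \<le> J - ls + int (length W) \<and> N dvd x)"
    proof
      assume "\<exists>x. J - ls \<le> x \<and> x \<le> J - ls + int (length W) \<and> N dvd x"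
      then obtain x where "J - ls \<le> x" "x \<le> J - ls + int (length W)" "N dvd x" by blast
      then have "J \<le> x + ls \<and> x + ls \<le> J + int (length W) \<and> N dvd (x + ls) - ls" by simp
      then show False using no_mult by blast
    qed
    then have "\<forall>t < length W. W ! t = run_length D N (J - ls + int t)"
      using shift[of "J - ls"] W(2) by simp
    then have "4 \<le> cyc_occ L W"
      using cyc_occ_run_lengths_ge4[OF N0 CS W(1) W(2) _ ls_mod(2)] by simp
    then show False using occ by simp
  qed
qed

lemma dvd_in_interval: "(N::int) dvd z \<Longrightarrow> - N < z \<Longrightarrow> z < N \<Longrightarrow> z = 0"
  using dvd_imp_le_int[of z N] by fastforce

text \<open>The index ranges \<open>[T, T + |S\<^sub>1|]\<close> and \<open>[T + |S\<^sub>1|, T + N]\<close> each contain a multiple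
  of \<open>N\<close>. These cannot both be \<open>T + |S\<^sub>1|\<close>, where the run length is \<open>\<lfloor>D/N\<rfloor> + 1 \<noteq> hd S\<^sub>2\<close>, so they
  are \<open>T\<close> and \<open>T + N\<close>. Shifting the multiples of \<open>N\<close> by \<open>ls\<close> gives \<open>|S\<^sub>1| = ls\<close>.\<close>
lemma CS_decomposition_offsets:
  fixes N D ls T :: int and S1 S2 L :: "nat list"
  assumes N: "2 \<le> N" "0 \<le> D" and ls: "0 < ls" "ls < N" "(ls * D) mod N = 1"
    and CS: "L = map (\<lambda>k. run_length D N (K + int k)) [0..<2 * nat N]"
    and S1: "\<forall>t < length S1. S1 ! t = run_length D N (T + int t)"
    and S2: "\<forall>t < length S2. S2 ! t = run_length D N (T + int (length S1) + int t)"
    and len: "int (length S1) + int (length S2) = N" "S1 \<noteq> []" "S2 \<noteq> []"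
    and occ: "cyc_occ L S1 = 2" "cyc_occ L S2 = 2" and hd: "hd S2 = nat (D div N)"
  shows "N dvd T \<and> int (length S1) = ls"
proof -
  define l1 where "l1 = int (length S1)"
  have l1: "0 < l1" "l1 < N" using len unfolding l1_def by auto
  have lengths: "length S1 \<le> 2 * nat N" "length S2 \<le> 2 * nat N" using len by auto
  note meets1 = twice_occurring_block_meets_multiples[OF N(1) ls(3) CS lengths(1) S1 occ(1)]
  note meets2 = twice_occurring_block_meets_multiples[OF N(1) ls(3) CS lengths(2) S2 occ(2)]
  have "N dvd T"
  proof -
    obtain x1 x2 where x: "T \<le> x1" "x1 \<le> T + l1" "T + l1 \<le> x2" "x2 \<le> T + N"
      "N dvd x1" "N dvd x2"
      using meets1(1) meets2(1) len(1) unfolding l1_def by (auto simp: add.assoc)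
    have "N dvd x2 - x1 - N" using x(5,6) by simp
    then have "x2 - x1 - N = 0 \<or> x2 - x1 = 0"
      using dvd_in_interval[of N "x2 - x1 - N"] dvd_in_interval[of N "x2 - x1"] x(5,6) x(1-4) N
      by (cases "x2 - x1 = N") auto
    moreover have "x2 \<noteq> x1"
    proof
      assume "x2 = x1"
      then have "N dvd T + l1" using x by auto
      moreover have "\<not> N dvd D" using ls(3) N by (metis dvd_mult dvd_imp_mod_0 zero_neq_one)
      ultimately have "run_length D N (T + l1 + int 0) = nat (D div N) + 1"
        using run_length_at_multiple[OF N] by simp
      moreover have "hd S2 = run_length D N (T + l1 + int 0)"
        using S2 len(3) unfolding l1_def by (simp add: hd_conv_nth)
      ultimately show False using hd by simp
    qed
    ultimately have "x1 = T" using x by auto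
    then show ?thesis using x(5) by simp
  qed
  moreover have "l1 = ls"
  proof -
    obtain y1 y2 where y: "T \<le> y1" "y1 \<le> T + l1" "T + l1 \<le> y2" "y2 \<le> T + N"
      "N dvd y1 - ls" "N dvd y2 - ls"
      using meets1(2) meets2(2) len(1) unfolding l1_def by (auto simp: add.assoc)
    have "N dvd y1 - T - ls" "N dvd y2 - T - ls"
      using y(5,6) \<open>N dvd T\<close> by (metis diff_diff_eq dvd_diff add.commute diff_add_cancel)+
    moreover have "- N < y1 - T - ls" "y1 - T - ls < N" "- N < y2 - T - ls" "y2 - T - ls < N"
      using y(1-4) l1 ls by linarith+
    ultimately have "y1 - T - ls = 0" "y2 - T - ls = 0" by (meson dvd_in_interval)+
    then show ?thesis using y(2,3) by simp
  qed
  ultimately show ?thesis unfolding l1_def by simp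
qed

section \<open>Convergents\<close>

lemma cf_between_0_1: "\<forall>x\<in>set xs. 0 < x \<Longrightarrow> 0 \<le> cf xs \<and> cf xs \<le> 1"
proof (induction xs)
  case (Cons x xs)
  then have "1 \<le> of_nat x + cf xs" by auto
  then show ?case by (simp add: divide_le_eq)
qed simp

text \<open>The entries of the matrix product
  \<open>[[0,1],[1,x\<^sub>1]] \<cdots> [[0,1],[1,x\<^sub>k]] [[0,1],[1,0]] = [[A,B],[C,E]]\<close>.\<close>
fun convergents :: "nat list \<Rightarrow> int \<times> int \<times> int \<times> int" where
  "convergents [] = (0, 1, 1, 0)"
| "convergents (x # xs) =
    (case convergents xs of (A, B, C, E) \<Rightarrow> (C, E, int x * C + A, int x * E + B))"

lemma convergents_nonneg:
  "convergents xs = (A, B, C, E) \<Longrightarrow> 0 \<le> A \<and> 0 \<le> B \<and> 0 \<le> C \<and> 0 \<le> E"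
  by (induction xs arbitrary: A B C E) (auto split: prod.splits)

lemma convergents_det:
  "convergents xs = (A, B, C, E) \<Longrightarrow> A * E - B * C = (if even (length xs) then -1 else 1)"
proof (induction xs arbitrary: A B C E)
  case (Cons x xs)
  obtain A0 B0 C0 E0 where "convergents xs = (A0, B0, C0, E0)" by (cases "convergents xs") auto
  with Cons show ?case by (auto simp: algebra_simps)
qed simp

lemma inverse_add_fraction:
  assumes "0 < C" "0 \<le> A" "0 < x"
  shows "1 / (of_nat x + of_int A / of_int C) = of_int C / (of_int (int x * C + A) :: rat)"
proof -
  have "0 < int x * C + A" using assms by (simp add: add_pos_nonneg)
  then have "(0::rat) < of_nat x * of_int C + of_int A"
    by (metis of_int_0_less_iff of_int_add of_int_mult of_int_of_nat_eq)
  then show ?thesis using assms(1) by (simp add: field_simps)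
qed

lemma convergents_cf:
  "\<forall>x\<in>set xs. 0 < x \<Longrightarrow> convergents xs = (A, B, C, E) \<Longrightarrow> 0 < C \<and> cf xs = of_int A / of_int C"
proof (induction xs arbitrary: A B C E)
  case (Cons x xs)
  obtain A0 B0 C0 E0 where M: "convergents xs = (A0, B0, C0, E0)" by (cases "convergents xs") auto
  then have IH: "0 < C0" "cf xs = of_int A0 / of_int C0" using Cons by auto
  have "0 \<le> A0" using convergents_nonneg[OF M] by simp
  moreover have "0 < int x * C0" using Cons.prems(1) IH(1) by simp
  moreover have "cf (x # xs) = of_int C0 / of_int (int x * C0 + A0)"
    using IH \<open>0 \<le> A0\<close> Cons.prems(1) by (simp add: inverse_add_fraction)
  ultimately show ?case using Cons.prems(2) M by auto
qed simp

lemma convergents_cf_butlast: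
  "\<forall>x\<in>set xs. 0 < x \<Longrightarrow> xs \<noteq> [] \<Longrightarrow> convergents xs = (A, B, C, E) \<Longrightarrow>
   0 < E \<and> cf (butlast xs) = of_int B / of_int E"
proof (induction xs arbitrary: A B C E)
  case (Cons x xs)
  obtain A0 B0 C0 E0 where M: "convergents xs = (A0, B0, C0, E0)" by (cases "convergents xs") auto
  show ?case
  proof (cases "xs = []")
    case False
    then have IH: "0 < E0" "cf (butlast xs) = of_int B0 / of_int E0" using Cons M by auto
    have "0 \<le> B0" using convergents_nonneg[OF M] by simp
    moreover have "0 < int x * E0" using Cons.prems(1) IH(1) by simp
    moreover have "cf (butlast (x # xs)) = of_int E0 / of_int (int x * E0 + B0)"
      using IH False \<open>0 \<le> B0\<close> Cons.prems(1) by (simp add: inverse_add_fraction)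
    ultimately show ?thesis using Cons.prems(3) M by auto
  qed (use Cons.prems in auto)
qed simp

lemma convergents_cf_append:
  "\<forall>x\<in>set xs. 0 < x \<Longrightarrow> 0 < c \<Longrightarrow> convergents xs = (A, B, C, E) \<Longrightarrow>
   cf (xs @ [c]) = of_int (int c * A + B) / of_int (int c * C + E)"
proof (induction xs arbitrary: A B C E)
  case (Cons x xs)
  obtain A0 B0 C0 E0 where M: "convergents xs = (A0, B0, C0, E0)" by (cases "convergents xs") auto
  then have IH: "cf (xs @ [c]) = of_int (int c * A0 + B0) / of_int (int c * C0 + E0)"
    using Cons by auto
  have "0 < C0" "0 \<le> E0" using convergents_cf[of xs] convergents_nonneg[OF M] Cons.prems M by auto
  then have "0 < int c * C0 + E0" using Cons.prems(2) by (simp add: add_pos_nonneg)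
  moreover have "0 \<le> int c * A0 + B0" using convergents_nonneg[OF M] by simp
  ultimately have "1 / (of_nat x + cf (xs @ [c]))
      = of_int (int c * C0 + E0) / of_int (int x * (int c * C0 + E0) + (int c * A0 + B0))"
    unfolding IH using Cons.prems(1) by (intro inverse_add_fraction) auto
  then have "cf ((x # xs) @ [c])
      = of_int (int c * C0 + E0) / of_int (int x * (int c * C0 + E0) + (int c * A0 + B0))"
    by simp
  moreover have "int c * A + B = int c * C0 + E0"
    "int c * C + E = int x * (int c * C0 + E0) + (int c * A0 + B0)"
    using Cons.prems(3) M by (auto simp: algebra_simps)
  ultimately show ?case by simp
qed simp

lemma convergents_bounds:
  "\<forall>x\<in>set xs. 0 < x \<Longrightarrow> xs \<noteq> [] \<Longrightarrow> 2 \<le> last xs \<Longrightarrow> convergents xs = (A, B, C, E) \<Longrightarrow>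
   B < A \<and> E < C \<and> A < C \<and> 1 \<le> A"
proof (induction xs arbitrary: A B C E)
  case (Cons x xs)
  obtain A0 B0 C0 E0 where M: "convergents xs = (A0, B0, C0, E0)" by (cases "convergents xs") auto
  show ?case
  proof (cases "xs = []")
    case False
    then have IH: "B0 < A0" "E0 < C0" "A0 < C0" "1 \<le> A0" using Cons M by auto
    have "1 \<le> int x" using Cons.prems(1) by simp
    then have "C0 \<le> int x * C0" "int x * E0 \<le> int x * C0"
      using IH convergents_nonneg[OF M] by (auto intro: mult_left_mono order.trans[of _ "1 * C0"])
    moreover have "A = C0" "B = E0" "C = int x * C0 + A0" "E = int x * E0 + B0"
      using Cons.prems(4) M by auto
    ultimately show ?thesis using IH by linarith
  qed (use Cons.prems in auto)
qed simp

lemma convergents_second_pos: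
  "\<forall>x\<in>set xs. 0 < x \<Longrightarrow> 2 \<le> length xs \<Longrightarrow> convergents xs = (A, B, C, E) \<Longrightarrow> 0 < B"
proof -
  assume pos: "\<forall>x\<in>set xs. 0 < x" and len: "2 \<le> length xs" and M: "convergents xs = (A, B, C, E)"
  obtain x ys where xs: "xs = x # ys" and "ys \<noteq> []" using len by (cases xs; cases "tl xs") auto
  obtain A0 B0 C0 E0 where "convergents ys = (A0, B0, C0, E0)" by (cases "convergents ys") auto
  then show ?thesis using convergents_cf_butlast[of ys] pos M xs \<open>ys \<noteq> []\<close> by auto
qed

lemma convergents_hd:
  "\<forall>x\<in>set xs. 0 < x \<Longrightarrow> 2 \<le> length xs \<Longrightarrow> 2 \<le> last xs \<Longrightarrow> convergents xs = (A, B, C, E) \<Longrightarrow>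
   int (hd xs) = C div A"
proof -
  assume pos: "\<forall>x\<in>set xs. 0 < x" and len: "2 \<le> length xs" and "2 \<le> last xs"
    and M: "convergents xs = (A, B, C, E)"
  obtain x ys where xs: "xs = x # ys" and "ys \<noteq> []" using len by (cases xs; cases "tl xs") auto
  obtain A0 B0 C0 E0 where M0: "convergents ys = (A0, B0, C0, E0)" by (cases "convergents ys") auto
  then have "A = C0" "C = int x * C0 + A0" using M xs by auto
  moreover have "0 \<le> A0" "A0 < C0"
    using convergents_bounds[OF _ \<open>ys \<noteq> []\<close> _ M0] convergents_nonneg[OF M0] pos xs \<open>2 \<le> last xs\<close>
      \<open>ys \<noteq> []\<close> by auto
  ultimately show ?thesis using xs by simp
qed

lemma coprime_of_det:
  fixes N N' D D' :: int
  assumes "D * N' - N * D' = 1 \<or> D * N' - N * D' = -1"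
  shows "coprime N N'" "coprime N D"
proof -
  have unit: "is_unit k" if "k dvd D * N' - N * D'" for k using that assms by auto
  show "coprime N N'" "coprime N D" by (auto intro!: coprimeI unit)
qed

lemma of_int_divide_less_iff:
  "0 < b \<Longrightarrow> 0 < d \<Longrightarrow> (of_int a / of_int b < (of_int c / of_int d :: rat)) \<longleftrightarrow> a * d < c * b"
  by (simp add: divide_less_eq less_divide_eq flip: of_int_mult)

lemma between_convergents_coordinates:
  fixes N N' D D' P Q c \<delta> :: int
  assumes det: "D * N' - N * D' = \<delta>" "\<delta> = 1 \<or> \<delta> = -1" and c: "0 < c"
    and lower: "0 < \<delta> * (P * N' - Q * D')" and upper: "0 < \<delta> * (Q * (c * D + D') - (c * N + N') * P)"
  shows "\<exists>u v. 0 < u \<and> 0 < v \<and> u < c * v \<and> Q = u * N + v * N' \<and> P = u * D + v * D'"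
proof (intro exI conjI)
  define u where "u = \<delta> * (P * N' - Q * D')"
  define v where "v = \<delta> * (Q * D - P * N)"
  show "0 < u" using lower unfolding u_def .
  have "c * v - u = \<delta> * (Q * (c * D + D') - (c * N + N') * P)" unfolding u_def v_def by algebra
  then show "u < c * v" using upper by simp
  then show "0 < v" using \<open>0 < u\<close> c by (smt (verit) mult_nonneg_nonpos)
  have "\<delta> * \<delta> = 1" using det(2) by auto
  then show "Q = u * N + v * N'" "P = u * D + v * D'" unfolding u_def v_def using det(1) by algebra+
qed

section \<open>Run lengths of \<open>CS(Q/P)\<close> for \<open>Q/P = (uN + vN')/(uD + vD')\<close>\<close>

lemma le_mediant_numerator:
  fixes u v N N' :: int
  assumes "0 \<le> u" "0 \<le> N" "1 \<le> N'" "0 \<le> v" "Q = u * N + v * N'"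
  shows "v \<le> Q"
proof -
  have "v * 1 \<le> v * N'" using assms by (intro mult_left_mono) auto
  then show ?thesis using assms by (simp add: add_increasing)
qed

lemma mediant_quotient_bound:
  fixes N N' d t b c :: int
  assumes N: "0 < N" and N': "0 \<le> N'" and b: "0 \<le> b" "b < N" and tc: "t + b*N' = c*N"
    and tL: "t < (d+1)*N + N'"
  shows "c - N' \<le> d"
proof -
  have "N' * (1 + b) \<le> N' * N" using N' b by (intro mult_left_mono) auto
  then have "c*N < (d+1)*N + N' * N" using tc tL by (simp add: algebra_simps)
  then have "N * c < N * (d + 1 + N')" by (simp add: algebra_simps)
  then have "c < d + 1 + N'" using N by simp
  then show ?thesis by simp
qed

lemma mediant_identity:
  fixes N N' u v t b c Q :: int
  assumes "Q = u * N + v * N'" "t + b * N' = c * N"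
  shows "t * v + b * Q - N * Q = N * (c * v - N' * v - (N - b) * u)"
  using assms by algebra

lemma mediant_lower_bound:
  fixes N N' u v t b c Q :: int
  assumes N: "0 < N" and N': "0 \<le> N'" and u: "0 \<le> u" and v: "1 \<le> v" and Q: "Q = u * N + v * N'"
    and t: "1 \<le> t" and b: "0 \<le> b" and tc: "t + b * N' = c * N"
  shows "N * v \<le> t * v + b * Q"
proof -
  have "0 < c * N" using tc t b N' by (metis add_pos_nonneg mult_nonneg_nonneg zero_less_one order.strict_trans2)
  then have "1 * N \<le> c * N" using N by (intro mult_right_mono) (auto simp: zero_less_mult_iff)
  then have "N * v \<le> (t + b * N') * v" using tc v by (intro mult_right_mono) auto
  moreover have "b * v * N' \<le> b * Q" using Q b u N by (simp add: algebra_simps)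
  ultimately show ?thesis by (simp add: algebra_simps)
qed

lemma mediant_bounds_even:
  fixes N N' u v e d t b c Q :: int
  assumes N: "0 < N" and N': "1 \<le> N'" and u: "0 \<le> u" and v: "1 \<le> v" and Q: "Q = u * N + v * N'"
    and e: "1 \<le> e" "e \<le> v" and dv: "d * v < u + e" "u + e \<le> (d + 1) * v"
    and t: "1 \<le> t" and b: "0 \<le> b" "b < N" and tc: "t + b * N' = c * N"
  shows "t < (d + 1) * N + N' \<Longrightarrow> t * v + b * Q - N * Q < N * e \<and> N * e \<le> t * v + b * Q"
    and "t = (d + 1) * N + N' \<Longrightarrow> b = N - 1 \<Longrightarrow>
      t * v + b * Q - 2 * N * Q < N * e \<and> N * e \<le> t * v + b * Q - N * Q"
proof -
  have vQ: "v \<le> Q" using le_mediant_numerator[OF u _ N' _ Q] N v by simp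
  show "t * v + b * Q - N * Q < N * e \<and> N * e \<le> t * v + b * Q" if "t < (d + 1) * N + N'"
  proof -
    have "c - N' \<le> d" using mediant_quotient_bound[OF N _ b tc that] N' by simp
    then have "(c - N') * v \<le> d * v" using v by (intro mult_right_mono) auto
    moreover have "u * 1 \<le> u * (N - b)" using u b by (intro mult_left_mono) auto
    ultimately have "c * v - N' * v - (N - b) * u < e" using dv(1) by (simp add: algebra_simps)
    then have "N * (c * v - N' * v - (N - b) * u) < N * e" using N by simp
    moreover have "N * e \<le> N * v" using e N by simp
    ultimately show ?thesis
      using mediant_identity[OF Q tc] mediant_lower_bound[OF N _ u v Q t b(1) tc] N' by simp
  qed
  show "t * v + b * Q - 2 * N * Q < N * e \<and> N * e \<le> t * v + b * Q - N * Q"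
    if "t = (d + 1) * N + N'" "b = N - 1"
  proof -
    have "t * v + b * Q - N * Q = N * ((d + 1) * v - u)" using that Q by algebra
    moreover have "N * e \<le> N * ((d + 1) * v - u)" using dv N by simp
    moreover have "(d + 1) * v - u - Q < e" using dv vQ by (simp add: algebra_simps)
    then have "N * ((d + 1) * v - u - Q) < N * e" using N by simp
    ultimately show ?thesis by (simp add: algebra_simps)
  qed
qed

lemma mediant_bounds_odd:
  fixes N N' u v e d t b c Q :: int
  assumes N: "0 < N" and N': "1 \<le> N'" and u: "0 \<le> u" and v: "1 \<le> v" and Q: "Q = u * N + v * N'"
    and e: "0 \<le> e" "e < v" and dv: "d * v \<le> u + e" "u + e < (d + 1) * v"
    and t: "1 \<le> t" and b: "0 \<le> b" "b < N" and tc: "t + b * N' = c * N"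
  shows "t < (d + 1) * N + N' \<Longrightarrow> N * e < t * v + b * Q \<and> t * v + b * Q - N * e \<le> N * Q"
    and "t = (d + 1) * N + N' \<Longrightarrow> b = N - 1 \<Longrightarrow>
      N * e + N * Q < t * v + b * Q \<and> t * v + b * Q \<le> 2 * N * Q + N * e"
proof -
  have vQ: "v \<le> Q" using le_mediant_numerator[OF u _ N' _ Q] N v by simp
  show "N * e < t * v + b * Q \<and> t * v + b * Q - N * e \<le> N * Q" if "t < (d + 1) * N + N'"
  proof -
    have "c - N' \<le> d" using mediant_quotient_bound[OF N _ b tc that] N' by simp
    then have "(c - N') * v \<le> d * v" using v by (intro mult_right_mono) auto
    moreover have "u * 1 \<le> u * (N - b)" using u b by (intro mult_left_mono) auto
    ultimately have "c * v - N' * v - (N - b) * u \<le> e" using dv(1) by (simp add: algebra_simps)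
    then have "N * (c * v - N' * v - (N - b) * u) \<le> N * e" using N by simp
    moreover have "N * e < N * v" using e N by simp
    ultimately show ?thesis
      using mediant_identity[OF Q tc] mediant_lower_bound[OF N _ u v Q t b(1) tc] N' by simp
  qed
  show "N * e + N * Q < t * v + b * Q \<and> t * v + b * Q \<le> 2 * N * Q + N * e"
    if "t = (d + 1) * N + N'" "b = N - 1"
  proof -
    have "t * v + b * Q - N * Q = N * ((d + 1) * v - u)" using that Q by algebra
    moreover have "N * e < N * ((d + 1) * v - u)" using dv N by simp
    moreover have "(d + 1) * v - u - e \<le> Q" using dv vQ by (simp add: algebra_simps)
    then have "N * ((d + 1) * v - u - e) \<le> N * Q" using N by simp
    ultimately show ?thesis by (simp add: algebra_simps)
  qed
qed

lemma coprime_dvd_mult_succ: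
  fixes N N' b :: int
  assumes "coprime N N'" "N dvd N' * (1 + b)" "0 \<le> b" "b < N"
  shows "b = N - 1"
proof -
  have "N dvd 1 + b" using assms(1,2) by (simp add: coprime_dvd_mult_right_iff)
  then have "N \<le> 1 + b" using assms(3) by (intro zdvd_imp_le) auto
  then show ?thesis using assms(4) by simp
qed

text \<open>With \<open>tD = aN - b\<close> one has \<open>N (tP + e) = aNQ - (tv + bQ - Ne)\<close>, and
  \<open>mediant_bounds_even\<close> puts \<open>tv + bQ - Ne\<close> into \<open>[0, NQ)\<close>, or into \<open>[NQ, 2NQ)\<close> at the
  last \<open>t\<close>.\<close>
lemma mediant_ceil_div_even:
  fixes N N' D D' u v e d Q P t :: int
  assumes N: "0 < N" and N': "1 \<le> N'" and det: "D * N' - N * D' = 1"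
    and u: "0 \<le> u" and v: "1 \<le> v" and Q: "Q = u * N + v * N'" and P: "P = u * D + v * D'"
    and e: "1 \<le> e" "e \<le> v" and dv: "d * v < u + e" "u + e \<le> (d + 1) * v"
    and t: "1 \<le> t" "t \<le> (d + 1) * N + N'"
  shows "ceil_div (t * P + e) Q = ceil_div (t * D) N - (if t = (d + 1) * N + N' then 1 else 0)"
proof -
  have Q0: "0 < Q" using le_mediant_numerator[OF u _ N' _ Q] N v by simp
  define a where "a = ceil_div (t * D) N"
  define b where "b = a * N - t * D"
  have b: "0 \<le> b" "b < N"
    using ceil_div_bounds[OF N, of "t * D"] unfolding a_def b_def by (auto simp: algebra_simps)
  have tc: "t + b * N' = (a * N' - t * D') * N" unfolding b_def using det by algebra
  have X: "N * (t * P + e) = N * (a * Q) - (t * v + b * Q - N * e)"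
    unfolding b_def using Q P det by algebra
  show ?thesis
  proof (cases "t = (d + 1) * N + N'")
    case False
    then have "t < (d + 1) * N + N'" using t by simp
    then have "ceil_div (t * P + e) Q = a"
      using mediant_bounds_even(1)[OF N N' u v Q e dv t(1) b tc]
      by (intro ceil_div_eqI_scaled[OF N Q0 X]) auto
    then show ?thesis using False unfolding a_def by simp
  next
    case True
    then have "N' * (1 + b) = (a * N' - t * D' - (d + 1)) * N" using tc by algebra
    moreover have "coprime N N'" using coprime_of_det(1)[of D N' N D'] det by simp
    ultimately have "b = N - 1" using coprime_dvd_mult_succ b by simp
    then have "ceil_div (t * P + e) Q = a - 1"
      using mediant_bounds_even(2)[OF N N' u v Q e dv t(1) b tc True] X
      by (intro ceil_div_eqI_scaled[OF N Q0, where R = "t * v + b * Q - N * e - N * Q"])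
        (auto simp: algebra_simps)
    then show ?thesis using True unfolding a_def by simp
  qed
qed

lemma mediant_ceil_div_odd:
  fixes N N' D D' u v e d Q P t :: int
  assumes N: "0 < N" and N': "1 \<le> N'" and det: "D * N' - N * D' = -1"
    and u: "0 \<le> u" and v: "1 \<le> v" and Q: "Q = u * N + v * N'" and P: "P = u * D + v * D'"
    and e: "0 \<le> e" "e < v" and dv: "d * v \<le> u + e" "u + e < (d + 1) * v"
    and t: "1 \<le> t" "t \<le> (d + 1) * N + N'"
  shows "ceil_div (t * P - e) Q = ceil_div (t * D + 1) N + (if t = (d + 1) * N + N' then 1 else 0)"
proof -
  have Q0: "0 < Q" using le_mediant_numerator[OF u _ N' _ Q] N v by simp
  define a where "a = ceil_div (t * D + 1) N"
  define b where "b = t * D - (a - 1) * N"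
  have b: "0 \<le> b" "b < N"
    using ceil_div_bounds[OF N, of "t * D + 1"] unfolding a_def b_def by (auto simp: algebra_simps)
  have tc: "t + b * N' = (t * D' - (a - 1) * N') * N" unfolding b_def using det by algebra
  have X: "N * (t * P - e) = N * (a * Q) - (N * Q - (t * v + b * Q - N * e))"
    unfolding b_def using Q P det by algebra
  show ?thesis
  proof (cases "t = (d + 1) * N + N'")
    case False
    then have "t < (d + 1) * N + N'" using t by simp
    then have "ceil_div (t * P - e) Q = a"
      using mediant_bounds_odd(1)[OF N N' u v Q e dv t(1) b tc]
      by (intro ceil_div_eqI_scaled[OF N Q0 X]) auto
    then show ?thesis using False unfolding a_def by simp
  next
    case True
    then have "N' * (1 + b) = (t * D' - (a - 1) * N' - (d + 1)) * N" using tc by algebra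
    moreover have "coprime N N'" using coprime_of_det(1)[of D N' N D'] det by simp
    ultimately have "b = N - 1" using coprime_dvd_mult_succ b by simp
    then have "ceil_div (t * P - e) Q = a + 1"
      using mediant_bounds_odd(2)[OF N N' u v Q e dv t(1) b tc True] X
      by (intro ceil_div_eqI_scaled[OF N Q0, where R = "2 * N * Q - (t * v + b * Q - N * e)"])
        (auto simp: algebra_simps)
    then show ?thesis using True unfolding a_def by simp
  qed
qed

lemma mediant_partial_sums_even:
  fixes N N' D D' u v e d Q P :: int
  assumes N: "0 < N" and N': "1 \<le> N'" and det: "D * N' - N * D' = 1"
    and u: "0 \<le> u" and v: "1 \<le> v" and Q: "Q = u * N + v * N'" and P: "P = u * D + v * D'"
    and e: "1 \<le> e" "e \<le> v" and dv: "d * v < u + e" "u + e \<le> (d + 1) * v"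
    and cop: "coprime P Q"
  shows "\<exists>J. \<forall>t. 0 \<le> t \<and> t \<le> (d + 1) * N + N' \<longrightarrow>
    ceil_div ((J + t) * P) Q - ceil_div (J * P) Q
      = ceil_div (t * D) N - (if 1 \<le> t then 1 else 0) - (if t = (d + 1) * N + N' then 1 else 0)"
proof -
  have Q0: "0 < Q" using le_mediant_numerator[OF u _ N' _ Q] N v by simp
  \<comment> \<open>The offset is \<open>J = e P\<^sup>-\<^sup>1 mod Q\<close>, so that \<open>J P \<equiv> e (mod Q)\<close>.\<close>
  obtain x y where xy: "x * P + y * Q = 1"
    using bezout_int[of P Q] cop by (auto simp: coprime_iff_gcd_eq_1)
  have "ceil_div e Q = 1" using e le_mediant_numerator[OF u _ N' _ Q] N by (intro ceil_div_eqI[OF Q0]) auto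
  then have shift: "ceil_div ((e * x + t) * P) Q - ceil_div (e * x * P) Q = ceil_div (t * P + e) Q - 1" for t
  proof -
    have eqs: "(e * x + t) * P = (t * P + e) + (- e * y) * Q" "e * x * P = e + (- e * y) * Q"
      using xy by algebra+
    show ?thesis
      unfolding eqs ceil_div_add_mult[OF Q0] using \<open>ceil_div e Q = 1\<close> by (simp only:)
  qed
  have "0 < (d + 1) * v" using dv e u by linarith
  then have "0 < (d + 1) * N + N'" using v N N' by (simp add: zero_less_mult_iff add_pos_pos)
  moreover have "ceil_div 0 N = 0" by (simp add: ceil_div_def)
  ultimately show ?thesis
    using shift mediant_ceil_div_even[OF N N' det u v Q P e dv] \<open>ceil_div e Q = 1\<close>
    by (intro exI[of _ "e * x"]) (force simp: not_le int_one_le_iff_zero_less)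
qed

lemma mediant_partial_sums_odd:
  fixes N N' D D' u v e d Q P :: int
  assumes N: "0 < N" and N': "1 \<le> N'" and det: "D * N' - N * D' = -1"
    and u: "0 \<le> u" and v: "1 \<le> v" and Q: "Q = u * N + v * N'" and P: "P = u * D + v * D'"
    and e: "0 \<le> e" "e < v" and dv: "d * v \<le> u + e" "u + e < (d + 1) * v"
    and cop: "coprime P Q"
  shows "\<exists>J. \<forall>t. 0 \<le> t \<and> t \<le> (d + 1) * N + N' \<longrightarrow>
    ceil_div ((J + t) * P) Q - ceil_div (J * P) Q
      = ceil_div ((N - N' + t) * D) N - ceil_div ((N - N') * D) N
        + (if 1 \<le> t then 1 else 0) + (if t = (d + 1) * N + N' then 1 else 0)"
proof -
  have Q0: "0 < Q" using le_mediant_numerator[OF u _ N' _ Q] N v by simp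
  obtain x y where xy: "x * P + y * Q = 1"
    using bezout_int[of P Q] cop by (auto simp: coprime_iff_gcd_eq_1)
  have "ceil_div (- e) Q = 0" using e le_mediant_numerator[OF u _ N' _ Q] N by (intro ceil_div_eqI[OF Q0]) auto
  then have lhs: "ceil_div ((- e * x + t) * P) Q - ceil_div (- e * x * P) Q = ceil_div (t * P - e) Q" for t
  proof -
    have eqs: "(- e * x + t) * P = (t * P - e) + (e * y) * Q" "- e * x * P = - e + (e * y) * Q"
      using xy by algebra+
    show ?thesis
      unfolding eqs ceil_div_add_mult[OF Q0] using \<open>ceil_div (- e) Q = 0\<close> by (simp only:)
  qed
  text \<open>Since \<open>(N - N') D \<equiv> 1 (mod N)\<close>, the right-hand side is a shifted version of
    \<open>ceil_div (t D + 1) N\<close>.\<close>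
  have "ceil_div 1 N = 1" using N by (intro ceil_div_eqI) auto
  then have rhs: "ceil_div ((N - N' + t) * D) N - ceil_div ((N - N') * D) N = ceil_div (t * D + 1) N - 1" for t
  proof -
    have "(N - N' + t) * D = (t * D + 1) + (D - D') * N" "(N - N') * D = 1 + (D - D') * N"
      using det by algebra+
    then show ?thesis using \<open>ceil_div 1 N = 1\<close> by (simp add: ceil_div_add_mult[OF N])
  qed
  have "0 < (d + 1) * v" using dv e u by linarith
  then have "0 < (d + 1) * N + N'" using v N N' by (simp add: zero_less_mult_iff add_pos_pos)
  then show ?thesis
    using lhs rhs mediant_ceil_div_odd[OF N N' det u v Q P e dv] \<open>ceil_div (- e) Q = 0\<close> \<open>ceil_div 1 N = 1\<close>
    by (intro exI[of _ "- e * x"]) (force simp: not_le int_one_le_iff_zero_less)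
qed

lemma div_between:
  fixes u v c :: int
  assumes "0 < v" "v \<le> u" "u < c * v"
  shows "u div v * v \<le> u \<and> u < (u div v + 1) * v \<and> 1 \<le> u div v \<and> u div v < c \<and> u div v \<le> u"
proof -
  have q: "u div v * v \<le> u" "u < (u div v + 1) * v" using div_bounds[OF assms(1)] by auto
  moreover have "1 \<le> u div v" using pos_imp_zdiv_pos_iff[of v u] assms(1,2) by simp
  moreover have "u div v < c" using q(1) assms(1,3) by (meson le_less_trans mult_less_cancel_right_pos)
  moreover have "u div v \<le> u div v * v" using assms(1) calculation(3) by simp
  ultimately show ?thesis by linarith
qed

lemma mediant_index_even:
  fixes u v c :: int
  assumes "0 < u" "0 < v" "u < c * v" "2 \<le> c"
  shows "\<exists>d e. 1 \<le> e \<and> e \<le> v \<and> d * v < u + e \<and> u + e \<le> (d + 1) * v \<and> 1 \<le> d \<and> d < c \<and> d \<le> u"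
proof (cases "v \<le> u")
  case True
  with div_between[OF assms(2) True assms(3)]
  have "1 \<le> (1::int) \<and> 1 \<le> v \<and> u div v * v < u + 1 \<and> u + 1 \<le> (u div v + 1) * v
      \<and> 1 \<le> u div v \<and> u div v < c \<and> u div v \<le> u" using assms(2) by auto
  then show ?thesis by blast
next
  case False
  with assms have "1 \<le> v \<and> v \<le> v \<and> 1 * v < u + v \<and> u + v \<le> (1 + 1) * v
      \<and> 1 \<le> (1::int) \<and> 1 < c \<and> 1 \<le> u" by auto
  then show ?thesis by blast
qed

lemma mediant_index_odd:
  fixes u v c :: int
  assumes "0 < u" "0 < v" "u < c * v" "2 \<le> c"
  shows "\<exists>d e. 0 \<le> e \<and> e < v \<and> d * v \<le> u + e \<and> u + e < (d + 1) * v \<and> 1 \<le> d \<and> d < c \<and> d \<le> u"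
proof (cases "v \<le> u")
  case True
  with div_between[OF assms(2) True assms(3)]
  have "0 \<le> (0::int) \<and> 0 < v \<and> u div v * v \<le> u + 0 \<and> u + 0 < (u div v + 1) * v
      \<and> 1 \<le> u div v \<and> u div v < c \<and> u div v \<le> u" using assms(2) by auto
  then show ?thesis by blast
next
  case False
  with assms have "0 \<le> v - u \<and> v - u < v \<and> 1 * v \<le> u + (v - u) \<and> u + (v - u) < (1 + 1) * v
      \<and> 1 \<le> (1::int) \<and> 1 < c \<and> 1 \<le> u" by auto
  then show ?thesis by blast
qed

lemma mediant_block_length_bounds:
  fixes N N' u v d :: int
  assumes "2 \<le> N" "0 \<le> N'" "1 \<le> d" "d \<le> u" "1 \<le> v"
  shows "2 \<le> (d + 1) * N + N'" "(d + 1) * N + N' \<le> 2 * (u * N + v * N')"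
proof -
  have "0 \<le> d * N" using assms by simp
  moreover have "(d + 1) * N = d * N + N" by (simp add: algebra_simps)
  ultimately show "2 \<le> (d + 1) * N + N'" using assms by linarith
  have "(d + 1) * N \<le> (2 * u) * N" using assms by (intro mult_right_mono) auto
  moreover have "N' * 1 \<le> N' * (2 * v)" using assms by (intro mult_left_mono) auto
  ultimately show "(d + 1) * N + N' \<le> 2 * (u * N + v * N')" by (simp add: algebra_simps)
qed

section \<open>The decomposition of \<open>CS(r)\<close>\<close>

locale CS_decomposition =
  fixes r :: rat and ms S1 S2 :: "nat list" and N N' D D' :: int
  assumes convergents: "convergents ms = (N, N', D, D')"
    and r: "0 < r" "r < 1" "\<forall>p::nat. 2 \<le> p \<longrightarrow> r \<noteq> 1 / of_nat p" "r = cf ms"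
    and ms: "2 \<le> length ms" "\<forall>x\<in>set ms. 0 < x" "2 \<le> last ms"
    and decomposition: "\<exists>j. rotate j (CS r) = S1 @ S2 @ S1 @ S2"
      "cyc_occ (CS r) S1 = 2" "cyc_occ (CS r) S2 = 2"
    and S1: "S1 \<noteq> []" "hd S1 = hd ms + 1" "last S1 = hd ms + 1"
    and S2: "S2 \<noteq> []" "hd S2 = hd ms" "last S2 = hd ms"
begin

lemma cf_butlast_between_0_1: "0 \<le> cf (butlast ms) \<and> cf (butlast ms) \<le> 1"
  using cf_between_0_1[of "butlast ms"] ms(2) by (meson in_set_butlastD)

lemma
  shows r_eq: "r = of_int N / of_int D"
    and cf_butlast_eq: "cf (butlast ms) = of_int N' / of_int D'"
    and N_ge_2: "2 \<le> N" and N'_pos: "0 < N'" and N'_less_N: "N' < N" and N_less_D: "N < D"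
    and D'_pos: "0 < D'"
    and det_eq: "D * N' - N * D' = (if even (length ms) then 1 else -1)"
    and hd_ms_eq: "int (hd ms) = D div N"
proof -
  have ms_ne: "ms \<noteq> []" using ms(1) by auto
  show r_eq: "r = of_int N / of_int D" using convergents_cf[OF ms(2) convergents] r(4) by simp
  show "cf (butlast ms) = of_int N' / of_int D'" "0 < D'"
    using convergents_cf_butlast[OF ms(2) ms_ne convergents] by auto
  have bounds: "N' < N" "N < D" "1 \<le> N"
    using convergents_bounds[OF ms(2) ms_ne ms(3) convergents] by auto
  then show "N' < N" "N < D" by auto
  show "0 < N'" using convergents_second_pos[OF ms(2) ms(1) convergents] .
  show "2 \<le> N"
  proof (rule ccontr)
    assume "\<not> 2 \<le> N"
    then have "r = 1 / of_nat (nat D)" "2 \<le> nat D" using r_eq bounds by auto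
    then show False using r(3) by blast
  qed
  show "D * N' - N * D' = (if even (length ms) then 1 else -1)"
    using convergents_det[OF convergents] by (auto simp: algebra_simps)
  show "int (hd ms) = D div N" using convergents_hd[OF ms(2) ms(1) ms(3) convergents] .
qed

lemma quotient_of_r: "quotient_of r = (N, D)"
proof -
  have "coprime N D" using coprime_of_det(2)[of D N' N D'] det_eq by (simp split: if_splits)
  moreover have "0 < D" using N_ge_2 N_less_D by simp
  ultimately show ?thesis unfolding r_eq
    by (metis Fract_of_int_quotient quotient_of_Fract normalize_stable)
qed

lemma S1_S2_run_lengths:
  defines "ls \<equiv> if even (length ms) then N' else N - N'"
  shows "int (length S1) = ls" "int (length S2) = N - ls"
    and "\<forall>t < length S1. S1 ! t = run_length D N (int t)"
    and "\<forall>t < length S2. S2 ! t = run_length D N (ls + int t)"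
proof -
  have N: "0 < N" using N_ge_2 by simp
  obtain K where CS: "CS r = map (\<lambda>k. run_length D N (K + int k)) [0..<2 * nat N]"
    using CS_eq_run_lengths[OF quotient_of_r r(1,2)] by blast
  obtain j where j: "rotate j (CS r) = S1 @ S2 @ S1 @ S2" using decomposition(1) by blast
  have "length (rotate j (CS r)) = 2 * nat N" using CS by simp
  then have len: "int (length S1) + int (length S2) = N" unfolding j using N by simp
  define T where "T = K + int j"
  have at_T: "rotate j (CS r) ! i = run_length D N (T + int i)" if "i < length S1 + length S2" for i
    unfolding T_def by (rule nth_rotate_run_lengths[OF N CS]) (use that len in linarith)
  have S1_at: "\<forall>t < length S1. S1 ! t = run_length D N (T + int t)"
  proof (intro allI impI)
    fix t assume "t < length S1"
    then show "S1 ! t = run_length D N (T + int t)" using at_T[of t] unfolding j by (simp add: nth_append)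
  qed
  have S2_at: "\<forall>t < length S2. S2 ! t = run_length D N (T + int (length S1) + int t)"
  proof (intro allI impI)
    fix t assume "t < length S2"
    then show "S2 ! t = run_length D N (T + int (length S1) + int t)"
      using at_T[of "length S1 + t"] unfolding j by (simp add: nth_append add.assoc)
  qed
  have ls: "0 < ls" "ls < N" "(ls * D) mod N = 1"
  proof -
    show "0 < ls" "ls < N" using N'_pos N'_less_N unfolding ls_def by auto
    have "ls * D = 1 + (if even (length ms) then D' else D - D') * N"
      using det_eq unfolding ls_def by (auto simp: algebra_simps)
    then show "(ls * D) mod N = 1" using N_ge_2 by simp
  qed
  have hd2: "hd S2 = nat (D div N)" using S2(2) hd_ms_eq by simp
  have "N dvd T" and l1: "int (length S1) = ls"
    using CS_decomposition_offsets[OF N_ge_2 _ ls CS S1_at S2_at len S1(1) S2(1)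
        decomposition(2,3) hd2] N_ge_2 N_less_D by auto
  then show "int (length S1) = ls" "int (length S2) = N - ls" using len by auto
  have shift: "run_length D N (T + x) = run_length D N x" for x
    using \<open>N dvd T\<close> N by (intro run_length_cong) (auto simp: mod_add_left_eq[symmetric])
  show "\<forall>t < length S1. S1 ! t = run_length D N (int t)" using S1_at shift by simp
  show "\<forall>t < length S2. S2 ! t = run_length D N (ls + int t)"
    using S2_at shift[of "ls + int _"] l1 by (simp add: add.assoc)
qed

lemma run_length_period_S1_S2:
  "run_length D N (T + int (i + length (S1 @ S2))) = run_length D N (T + int i)"
proof -
  have "int (length (S1 @ S2)) = N" using S1_S2_run_lengths(1,2) by simp
  then show ?thesis using run_length_periodic[of N D "T + int i" 1] N_ge_2 by (simp add: add.assoc)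
qed

lemma block_run_lengths_even:
  assumes "even (length ms)"
  shows "\<forall>t < length (S1 @ concat (replicate k (S2 @ S1)) @ S2 @ S1).
    (S1 @ concat (replicate k (S2 @ S1)) @ S2 @ S1) ! t = run_length D N (int t)"
proof (rule nth_alternating_block)
  show "\<forall>i < length (S1 @ S2). (S1 @ S2) ! i = run_length D N (int i)"
    using S1_S2_run_lengths assms by (auto simp: nth_append)
  show "\<forall>i. run_length D N (int (i + length (S1 @ S2))) = run_length D N (int i)"
    using run_length_period_S1_S2[of 0] by simp
qed

lemma block_run_lengths_odd:
  assumes odd: "odd (length ms)"
  shows "\<forall>t < length (S2 @ concat (replicate k (S1 @ S2)) @ S1 @ S2).
    (S2 @ concat (replicate k (S1 @ S2)) @ S1 @ S2) ! t = run_length D N (N - N' + int t)"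
proof (rule nth_alternating_block)
  show "\<forall>i < length (S2 @ S1). (S2 @ S1) ! i = run_length D N (N - N' + int i)"
  proof (intro allI impI)
    fix i assume i: "i < length (S2 @ S1)"
    show "(S2 @ S1) ! i = run_length D N (N - N' + int i)"
    proof (cases "i < length S2")
      case True
      then show ?thesis using S1_S2_run_lengths(4) odd by (simp add: nth_append)
    next
      case False
      then have "(S2 @ S1) ! i = run_length D N (int (i - length S2) + 1 * N)"
        using S1_S2_run_lengths(3) i run_length_periodic[of N D "int (i - length S2)" 1] N_ge_2
        by (simp add: nth_append)
      also have "int (i - length S2) + 1 * N = N - N' + int i"
        using False S1_S2_run_lengths(1,2) odd by simp
      finally show ?thesis .
    qed
  qed
  show "\<forall>i. run_length D N (N - N' + int (i + length (S2 @ S1))) = run_length D N (N - N' + int i)"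
    using run_length_period_S1_S2[of "N - N'"] by (simp add: add.commute)
qed


lemma slope_coordinates:
  assumes qs: "quotient_of s = (Q, P)" and c: "2 \<le> c"
    and s: "if even (length ms) then cf (ms @ [c]) < s \<and> s < cf (butlast ms)
      else cf (butlast ms) < s \<and> s < cf (ms @ [c])"
  shows "0 < s \<and> s < 1"
    and "\<exists>u v. 0 < u \<and> 0 < v \<and> u < int c * v \<and> Q = u * N + v * N' \<and> P = u * D + v * D'"
proof -
  have "0 \<le> cf (ms @ [c])" "cf (ms @ [c]) \<le> 1" using cf_between_0_1[of "ms @ [c]"] ms(2) c by auto
  then show "0 < s \<and> s < 1" using s cf_butlast_between_0_1 by (auto split: if_splits)
  have P: "0 < P" "s = of_int Q / of_int P" using quotient_of_denom_pos[OF qs] quotient_of_div[OF qs] by auto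
  have cD: "0 < int c * D + D'" using N_ge_2 N_less_D D'_pos c by (simp add: add_pos_pos)
  have cf_c: "cf (ms @ [c]) = of_int (int c * N + N') / of_int (int c * D + D')"
    using convergents_cf_append[OF ms(2) _ convergents] c by simp
  define \<delta> :: int where "\<delta> = (if even (length ms) then 1 else -1)"
  have "0 < \<delta> * (P * N' - Q * D')" "0 < \<delta> * (Q * (int c * D + D') - (int c * N + N') * P)"
    using s of_int_divide_less_iff[OF P(1) D'_pos, of Q N'] of_int_divide_less_iff[OF D'_pos P(1), of N' Q]
      of_int_divide_less_iff[OF cD P(1), of "int c * N + N'" Q]
      of_int_divide_less_iff[OF P(1) cD, of Q "int c * N + N'"]
    unfolding P(2) cf_c cf_butlast_eq \<delta>_def by (auto simp: algebra_simps split: if_splits)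
  then show "\<exists>u v. 0 < u \<and> 0 < v \<and> u < int c * v \<and> Q = u * N + v * N' \<and> P = u * D + v * D'"
    using det_eq c unfolding \<delta>_def by (intro between_convergents_coordinates) auto
qed

lemma even_case:
  assumes even: "even (length ms)" and c: "2 \<le> c"
    and s: "cf (ms @ [c]) < s" "s < cf (butlast ms)"
  shows "\<exists>d::nat. 1 \<le> d \<and> d < c \<and>
    cyc_contains (CS s) ([hd ms] @ tl S1 @ concat (replicate d (S2 @ S1)) @ S2 @ butlast S1 @ [hd ms])"
proof -
  obtain Q P where qs: "quotient_of s = (Q, P)" by fastforce
  obtain K where CS: "CS s = map (\<lambda>k. run_length P Q (K + int k)) [0..<2 * nat Q]"
    using CS_eq_run_lengths[OF qs] slope_coordinates(1)[OF qs c] even s by auto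
  obtain u v where uv: "0 < u" "0 < v" "u < int c * v" "Q = u * N + v * N'" "P = u * D + v * D'"
    using slope_coordinates(2)[OF qs c] even s by auto
  obtain d e where de: "1 \<le> e" "e \<le> v" "d * v < u + e" "u + e \<le> (d + 1) * v" "1 \<le> d"
    "d < int c" "d \<le> u"
    using mediant_index_even[OF uv(1-3)] c by auto
  have "coprime P Q" using quotient_of_coprime[OF qs] by (simp add: coprime_commute)
  then obtain J where sums: "\<forall>t. 0 \<le> t \<and> t \<le> (d + 1) * N + N' \<longrightarrow>
      ceil_div ((J + t) * P) Q - ceil_div (J * P) Q
        = ceil_div (t * D) N - (if 1 \<le> t then 1 else 0) - (if t = (d + 1) * N + N' then 1 else 0)"
    using mediant_partial_sums_even[OF _ _ _ _ _ uv(4,5) de(1-4)] N_ge_2 N'_pos det_eq even uv by auto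
  define W where "W = S1 @ concat (replicate (nat d) (S2 @ S1)) @ S2 @ S1"
  have "int (length W) = (d + 1) * (int (length S1) + int (length S2)) + int (length S1)"
    unfolding W_def alternating_block_length using de(5) by (simp add: algebra_simps)
  then have W_len: "int (length W) = (d + 1) * N + N'"
    using S1_S2_run_lengths(1,2) even by simp
  have len: "2 \<le> length W" "length W \<le> 2 * nat Q"
    using mediant_block_length_bounds[of N N' d u v] N_ge_2 N'_pos de uv W_len by auto
  define mid where "mid = tl S1 @ concat (replicate (nat d) (S2 @ S1)) @ S2 @ butlast S1"
  have ends: "W = [hd ms + 1] @ mid @ [hd ms + 1]"
    unfolding W_def mid_def
    using alternating_block_ends[OF S1, of "concat (replicate (nat d) (S2 @ S1)) @ S2"] by simp
  have runs: "\<forall>t < length W. W ! t = run_length D N (0 + int t)"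
    using block_run_lengths_even[OF even] unfolding W_def by simp
  have sums': "\<forall>t. 0 \<le> t \<and> t \<le> int (length W) \<longrightarrow> ceil_div ((J + t) * P) Q - ceil_div (J * P) Q
      = ceil_div ((0 + t) * D) N - ceil_div (0 * D) N
        + (-1) * ((if 1 \<le> t then 1 else 0) + (if t = int (length W) then 1 else 0))"
    using sums W_len by (simp add: ceil_div_def)
  have "0 < Q" "0 \<le> P" "0 < N" "0 \<le> D"
    using uv N_ge_2 N'_pos N_less_D D'_pos by (simp_all add: add_pos_pos)
  then have "cyc_contains (CS s) ([hd ms] @ mid @ [hd ms])"
    by (intro cyc_contains_perturbed_block[OF _ _ CS _ _ sums' runs len ends refl]) simp_all
  then show ?thesis using de(5,6) unfolding mid_def by (intro exI[of _ "nat d"]) auto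
qed

lemma odd_case:
  assumes odd: "odd (length ms)" and c: "2 \<le> c"
    and s: "cf (butlast ms) < s" "s < cf (ms @ [c])"
  shows "\<exists>d::nat. 1 \<le> d \<and> d < c \<and>
    cyc_contains (CS s) ([hd ms + 1] @ tl S2 @ concat (replicate d (S1 @ S2)) @ S1 @ butlast S2 @ [hd ms + 1])"
proof -
  obtain Q P where qs: "quotient_of s = (Q, P)" by fastforce
  obtain K where CS: "CS s = map (\<lambda>k. run_length P Q (K + int k)) [0..<2 * nat Q]"
    using CS_eq_run_lengths[OF qs] slope_coordinates(1)[OF qs c] odd s by auto
  obtain u v where uv: "0 < u" "0 < v" "u < int c * v" "Q = u * N + v * N'" "P = u * D + v * D'"
    using slope_coordinates(2)[OF qs c] odd s by auto
  obtain d e where de: "0 \<le> e" "e < v" "d * v \<le> u + e" "u + e < (d + 1) * v" "1 \<le> d"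
    "d < int c" "d \<le> u"
    using mediant_index_odd[OF uv(1-3)] c by auto
  have "coprime P Q" using quotient_of_coprime[OF qs] by (simp add: coprime_commute)
  then obtain J where sums: "\<forall>t. 0 \<le> t \<and> t \<le> (d + 1) * N + N' \<longrightarrow>
      ceil_div ((J + t) * P) Q - ceil_div (J * P) Q
        = ceil_div ((N - N' + t) * D) N - ceil_div ((N - N') * D) N
          + (if 1 \<le> t then 1 else 0) + (if t = (d + 1) * N + N' then 1 else 0)"
    using mediant_partial_sums_odd[OF _ _ _ _ _ uv(4,5) de(1-4)] N_ge_2 N'_pos det_eq odd uv by auto
  define W where "W = S2 @ concat (replicate (nat d) (S1 @ S2)) @ S1 @ S2"
  have "int (length W) = (d + 1) * (int (length S1) + int (length S2)) + int (length S2)"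
    unfolding W_def alternating_block_length using de(5) by (simp add: algebra_simps)
  then have W_len: "int (length W) = (d + 1) * N + N'"
    using S1_S2_run_lengths(1,2) odd by simp
  have len: "2 \<le> length W" "length W \<le> 2 * nat Q"
    using mediant_block_length_bounds[of N N' d u v] N_ge_2 N'_pos de uv W_len by auto
  define mid where "mid = tl S2 @ concat (replicate (nat d) (S1 @ S2)) @ S1 @ butlast S2"
  have ends: "W = [hd ms] @ mid @ [hd ms]"
    unfolding W_def mid_def
    using alternating_block_ends[OF S2, of "concat (replicate (nat d) (S1 @ S2)) @ S1"] by simp
  have runs: "\<forall>t < length W. W ! t = run_length D N (N - N' + int t)"
    using block_run_lengths_odd[OF odd] unfolding W_def by simp
  have sums': "\<forall>t. 0 \<le> t \<and> t \<le> int (length W) \<longrightarrow> ceil_div ((J + t) * P) Q - ceil_div (J * P) Q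
      = ceil_div ((N - N' + t) * D) N - ceil_div ((N - N') * D) N
        + 1 * ((if 1 \<le> t then 1 else 0) + (if t = int (length W) then 1 else 0))"
    using sums W_len by simp
  have "0 < Q" "0 \<le> P" "0 < N" "0 \<le> D"
    using uv N_ge_2 N'_pos N_less_D D'_pos by (simp_all add: add_pos_pos)
  then have "cyc_contains (CS s) ([hd ms + 1] @ mid @ [hd ms + 1])"
    by (intro cyc_contains_perturbed_block[OF _ _ CS _ _ sums' runs len ends refl]) simp_all
  then show ?thesis using de(5,6) unfolding mid_def by (intro exI[of _ "nat d"]) auto
qed

end

theorem lemma2p5:
  fixes r s :: rat and ms :: "nat list" and n :: nat and S1 S2 :: "nat list"
  assumes "0 < r" and "r < 1" and "\<forall>p::nat. p \<ge> 2 \<longrightarrow> r \<noteq> 1 / of_nat p"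
    and "length ms \<ge> 2" and "\<forall>x\<in>set ms. x > 0" and "last ms \<ge> 2" and "r = cf ms"
    and "n \<ge> 2"
    and "\<exists>j. rotate j (CS r) = S1 @ S2 @ S1 @ S2"
    and "rev S1 = S1" and "rev S2 = S2"
    and "cyc_occ (CS r) S1 = 2" and "cyc_occ (CS r) S2 = 2"
    and "S1 \<noteq> []" and "hd S1 = hd ms + 1" and "last S1 = hd ms + 1"
    and "S2 \<noteq> []" and "hd S2 = hd ms" and "last S2 = hd ms"
  shows "(even (length ms) \<and> cf (ms @ [2*n-2]) < s \<and> s < cf (butlast ms) \<longrightarrow>
            (\<exists>d::nat. 1 \<le> d \<and> d \<le> 2*n-3 \<and>
               cyc_contains (CS s)
                 ([hd ms] @ tl S1 @ concat (replicate d (S2 @ S1)) @ S2 @ butlast S1 @ [hd ms])))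
       \<and> (odd (length ms) \<and> cf (butlast ms) < s \<and> s < cf (ms @ [2*n-2]) \<longrightarrow>
            (\<exists>d::nat. 1 \<le> d \<and> d \<le> 2*n-3 \<and>
               cyc_contains (CS s)
                 ([hd ms + 1] @ tl S2 @ concat (replicate d (S1 @ S2)) @ S1 @ butlast S2 @ [hd ms + 1])))"
proof -
  obtain N N' D D' where "convergents ms = (N, N', D, D')" by (cases "convergents ms") auto
  then interpret CS_decomposition r ms S1 S2 N N' D D'
    using assms by unfold_locales auto
  have c: "2 \<le> 2 * n - 2" using \<open>n \<ge> 2\<close> by simp
  show ?thesis
  proof (intro conjI impI)
    assume "even (length ms) \<and> cf (ms @ [2*n-2]) < s \<and> s < cf (butlast ms)"
    then show "\<exists>d::nat. 1 \<le> d \<and> d \<le> 2*n-3 \<and>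
        cyc_contains (CS s) ([hd ms] @ tl S1 @ concat (replicate d (S2 @ S1)) @ S2 @ butlast S1 @ [hd ms])"
      using even_case[OF _ c] by fastforce
  next
    assume "odd (length ms) \<and> cf (butlast ms) < s \<and> s < cf (ms @ [2*n-2])"
    then show "\<exists>d::nat. 1 \<le> d \<and> d \<le> 2*n-3 \<and>
        cyc_contains (CS s) ([hd ms + 1] @ tl S2 @ concat (replicate d (S1 @ S2)) @ S1 @ butlast S2 @ [hd ms + 1])"
      using odd_case[OF _ c] by fastforce
  qed
qed


end
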